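(* Let $(X,X^+)$ be an ordered Banach space whose positive cone $X^+$ is generating and normal, and let $T \in \mathcal{L}(X)$ be positive. Then the following assertions are equivalent: (i) $\operatorname{r}(T) < 1$, where $\operatorname{r}(T)$ denotes the spectral radius of $T$. (ii) The operator $\mathrm{id} - T : X \to X$ is bijective and its inverse $(\mathrm{id}-T)^{-1}$ is positive. (iii) (Monotone bounded invertibility property) There exists a number $c \ge 0$ such that for all $x,y \in X^+$, $(\mathrm{id}-T)x \le y$ implies $\|x\| \le c\|y\|$. (iv) (Uniform small-gain condition) There is a number $\eta > 0$ such that $\operatorname{dist}\big((T-\mathrm{id})x, X^+\big) \ge \eta \|x\|$ for each $x \in X^+$. (v) (Robust small-gain condition) There exists $\varepsilon > 0$ such that $(T+P)x \not\ge x$ for every $0 \neq x \in X^+$ and every positive operator $P \in \mathcal{L}(X)$ with $\|P\| \le \varepsilon$. (vi) (Rank-1 robust small-gain condition) There exists $\varepsilon > 0$ such that $(T+P)x \not\ge x$ for every $0 \neq x \in X^+$ and every positive operator $P \in \mathcal{L}(X)$ of rank $1$ with $\|P\| \le \varepsilon$.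
   Context: An ordered Banach space $(X,X^+)$ is a real Banach space $X$ together with a non-empty closed set $X^+\subseteq X$ such that $\alpha X^+ + \beta X^+ \subseteq X^+$ for all $\alpha,\beta\ge 0$ and $X^+\cap(-X^+)=\{0\}$; it induces the partial order $x\le y \iff y-x\in X^+$, and $x\not\ge y$ means $x-y\notin X^+$. The cone is generating if $X^+ - X^+ = X$, and normal if there is $C>0$ with $\|x\|\le C\|y\|$ whenever $0\le x\le y$. A linear operator $A$ is positive if $AX^+\subseteq X^+$. $\operatorname{dist}(x,S)=\inf\{\|x-y\|: y\in S\}$. Spectral notions (spectrum, spectral radius) of an operator on a real Banach space are those of its unique bounded extension to a complexification of $X$. $\mathcal{L}(X)$ is the space of bounded linear operators on $X$ and $\mathrm{id}$ the identity. *)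

theory Defs
  imports "HOL-Analysis.Analysis"
begin

definition ordered_cone :: "'a::banach set \<Rightarrow> bool" where
  "ordered_cone K \<longleftrightarrow> K \<noteq> {} \<and> closed K \<and>
     (\<forall>\<alpha> \<beta> x y. \<alpha> \<ge> 0 \<longrightarrow> \<beta> \<ge> 0 \<longrightarrow> x \<in> K \<longrightarrow> y \<in> K \<longrightarrow> \<alpha> *\<^sub>R x + \<beta> *\<^sub>R y \<in> K) \<and>
     K \<inter> uminus ` K = {0}"

definition generating_cone :: "'a::banach set \<Rightarrow> bool" where
  "generating_cone K \<longleftrightarrow> {x - y | x y. x \<in> K \<and> y \<in> K} = UNIV"

definition normal_cone :: "'a::banach set \<Rightarrow> bool" where
  "normal_cone K \<longleftrightarrow> (\<exists>C>0. \<forall>x y. x \<in> K \<longrightarrow> y - x \<in> K \<longrightarrow> norm x \<le> C * norm y)"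

definition positive_op :: "'a::banach set \<Rightarrow> ('a \<Rightarrow>\<^sub>L 'a) \<Rightarrow> bool" where
  "positive_op K T \<longleftrightarrow> blinfun_apply T ` K \<subseteq> K"

text \<open>Complexification X_C = X \<times> X, with (a + i b)(x,y) = (a x - b y, b x + a y) and
  T_C (x,y) = (T x, T y).  The operator T_C - \<lambda> id acting on X \<times> X (as a bounded real-linear map).\<close>
definition complexified_shift :: "('a::banach \<Rightarrow>\<^sub>L 'a) \<Rightarrow> complex \<Rightarrow> (('a \<times> 'a) \<Rightarrow>\<^sub>L ('a \<times> 'a))" where
  "complexified_shift T z = Blinfun (\<lambda>(x, y).
      (T x - (Re z *\<^sub>R x - Im z *\<^sub>R y), T y - (Im z *\<^sub>R x + Re z *\<^sub>R y)))"

text \<open>Spectrum of (the complexification of) T: those \<lambda> for which T_C - \<lambda> id has no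
  bounded inverse. (Any bounded real-linear inverse of a complex-linear map is complex-linear.)\<close>
definition op_spectrum :: "('a::banach \<Rightarrow>\<^sub>L 'a) \<Rightarrow> complex set" where
  "op_spectrum T = {z. \<not> (\<exists>S. S o\<^sub>L complexified_shift T z = id_blinfun \<and>
                                 complexified_shift T z o\<^sub>L S = id_blinfun)}"

definition spectral_radius :: "('a::banach \<Rightarrow>\<^sub>L 'a) \<Rightarrow> real" where
  "spectral_radius T = (if op_spectrum T = {} then 0 else Sup (cmod ` op_spectrum T))"

end

theory Submission
  imports Defs
begin

text \<open>
  (i) \<open>\<Longrightarrow>\<close> (ii): every real \<open>\<lambda> \<ge> 1\<close> lies outside the spectrum, so \<open>(\<lambda> - T)\<^sup>-\<^sup>1\<close>
  exists. For \<open>\<lambda> > \<parallel>T\<parallel>\<close> it is a positive Neumann series, and positivity propagates down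
  to \<open>\<lambda> = 1\<close>: moving from \<open>\<lambda>\<close> down to \<open>\<lambda> - d\<close> multiplies the resolvent by the positive
  series \<open>\<Sum>\<^sub>n (d (\<lambda> - T)\<^sup>-\<^sup>1)\<^sup>n\<close>.
  (ii) \<open>\<Longrightarrow>\<close> (iii): a positive linear map on a space with a closed normal cone is bounded on
  the cone, and \<open>x \<le> (id - T)\<^sup>-\<^sup>1 y\<close> whenever \<open>(id - T) x \<le> y\<close>.
  (iii) \<open>\<Longrightarrow>\<close> (i): (iii) survives replacing \<open>T\<close> by \<open>(1 + \<delta>) T\<close> for small \<open>\<delta>\<close>. Telescoping
  and normality then bound the powers of \<open>(1 + \<delta>) T\<close> on the cone, the generating cone and
  the uniform boundedness principle bound them in norm, hence \<open>r(T) \<le> 1 / (1 + \<delta>)\<close>.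
  (i) \<open>\<Longrightarrow>\<close> (iv) \<open>\<Longrightarrow>\<close> (v) \<open>\<Longrightarrow>\<close> (vi) are direct estimates. (vi) \<open>\<Longrightarrow>\<close> (iii): if
  \<open>(id - T) x \<le> y\<close> with \<open>\<parallel>y\<parallel>\<close> much smaller than \<open>\<parallel>x\<parallel>\<close>, the positive rank-one operator
  \<open>P w = \<phi> w / \<phi> x \<cdot> (y + s x)\<close> is small and satisfies \<open>(T + P) x \<ge> x\<close>; here \<open>\<phi>\<close> is a
  positive functional with \<open>\<phi> x \<ge> \<parallel>x\<parallel> / C\<close>, obtained by Hahn-Banach from the normality of
  the cone.
\<close>

section \<open>Cones and positive operators\<close>

lemma cone_nonneg_combination:
  "ordered_cone K \<Longrightarrow> 0 \<le> a \<Longrightarrow> 0 \<le> b \<Longrightarrow> x \<in> K \<Longrightarrow> y \<in> K \<Longrightarrow> a *\<^sub>R x + b *\<^sub>R y \<in> K"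
  unfolding ordered_cone_def by blast

lemma cone_zero:
  assumes "ordered_cone K" shows "0 \<in> K"
proof -
  obtain x where "x \<in> K" using assms unfolding ordered_cone_def by blast
  from cone_nonneg_combination[OF assms _ _ this this, of 0 0] show ?thesis by simp
qed

lemma cone_nonempty: "ordered_cone K \<Longrightarrow> K \<noteq> {}"
  using cone_zero by blast

lemma cone_add: "ordered_cone K \<Longrightarrow> x \<in> K \<Longrightarrow> y \<in> K \<Longrightarrow> x + y \<in> K"
  using cone_nonneg_combination[of K 1 1 x y] by simp

lemma cone_scaleR: "ordered_cone K \<Longrightarrow> 0 \<le> t \<Longrightarrow> x \<in> K \<Longrightarrow> t *\<^sub>R x \<in> K"
  using cone_nonneg_combination[of K t 0 x x] by simp

lemma cone_closed: "ordered_cone K \<Longrightarrow> closed K"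
  unfolding ordered_cone_def by blast

lemma cone_antisym:
  assumes "ordered_cone K" "x \<in> K" "- x \<in> K" shows "x = 0"
proof -
  have "x \<in> uminus ` K" using assms(3) by (metis image_eqI minus_minus)
  with assms(1,2) show ?thesis unfolding ordered_cone_def by blast
qed

lemma cone_add_eq_zero:
  assumes "ordered_cone K" "x \<in> K" "y \<in> K" "x + y = 0" shows "x = 0"
  using cone_antisym[OF assms(1,2)] assms(3,4) by (simp add: add_eq_0_iff)

lemma cone_sum: "ordered_cone K \<Longrightarrow> (\<And>i. i \<in> I \<Longrightarrow> f i \<in> K) \<Longrightarrow> sum f I \<in> K"
  by (induction I rule: infinite_finite_induct) (simp_all add: cone_zero cone_add)

lemma cone_suminf_minus:
  assumes cone: "ordered_cone K" and "summable f" and "\<And>n. f n \<in> K" and "finite I"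
  shows "suminf f - sum f I \<in> K"
proof (rule Lim_in_closed_set[OF cone_closed[OF cone]])
  obtain m where m: "I \<subseteq> {..<m}"
    using \<open>finite I\<close> finite_nat_iff_bounded by blast
  show "\<forall>\<^sub>F n in sequentially. (\<Sum>i<n. f i) - sum f I \<in> K"
    using eventually_ge_at_top[of m]
  proof eventually_elim
    case (elim n)
    then have "(\<Sum>i<n. f i) - sum f I = sum f ({..<n} - I)"
      using m by (subst sum_diff) auto
    also have "\<dots> \<in> K" using cone assms(3) by (intro cone_sum)
    finally show ?case .
  qed
  show "(\<lambda>n. (\<Sum>i<n. f i) - sum f I) \<longlonglongrightarrow> suminf f - sum f I"
    by (intro tendsto_diff summable_LIMSEQ assms(2) tendsto_const)
qed simp

lemma cone_suminf: "ordered_cone K \<Longrightarrow> summable f \<Longrightarrow> (\<And>n. f n \<in> K) \<Longrightarrow> suminf f \<in> K"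
  using cone_suminf_minus[of K f "{}"] by simp

lemma normal_coneE:
  assumes "normal_cone K"
  obtains C where "C > 0" "\<And>x y. x \<in> K \<Longrightarrow> y - x \<in> K \<Longrightarrow> norm x \<le> C * norm y"
  using assms unfolding normal_cone_def by blast

lemma positive_opD: "positive_op K A \<Longrightarrow> x \<in> K \<Longrightarrow> A x \<in> K"
  unfolding positive_op_def by blast

lemma positive_op_compose: "positive_op K A \<Longrightarrow> positive_op K B \<Longrightarrow> positive_op K (A o\<^sub>L B)"
  unfolding positive_op_def by auto

lemma positive_op_scaleR:
  "ordered_cone K \<Longrightarrow> 0 \<le> a \<Longrightarrow> positive_op K A \<Longrightarrow> positive_op K (a *\<^sub>R A)"
  unfolding positive_op_def by (auto simp: cone_scaleR blinfun.scaleR_left)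

section \<open>Neumann series\<close>

primrec blinfun_pow :: "('a::real_normed_vector \<Rightarrow>\<^sub>L 'a) \<Rightarrow> nat \<Rightarrow> 'a \<Rightarrow>\<^sub>L 'a" where
  "blinfun_pow A 0 = id_blinfun"
| "blinfun_pow A (Suc n) = A o\<^sub>L blinfun_pow A n"

lemma blinfun_pow_Suc_apply': "blinfun_pow A (Suc n) x = blinfun_pow A n (A x)"
  by (induction n arbitrary: x) simp_all

lemma blinfun_pow_scaleR: "blinfun_pow (a *\<^sub>R A) n = (a ^ n) *\<^sub>R blinfun_pow A n"
  by (induction n) (auto intro!: blinfun_eqI simp: blinfun.bilinear_simps)

lemma norm_blinfun_pow_le: "norm (blinfun_pow A n) \<le> norm A ^ n"
proof (induction n)
  case 0 then show ?case by (simp add: norm_blinfun_id_le)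
next
  case (Suc n)
  have "norm (blinfun_pow A (Suc n)) \<le> norm A * norm (blinfun_pow A n)"
    by (simp add: norm_blinfun_compose)
  also have "\<dots> \<le> norm A * norm A ^ n"
    using Suc by (simp add: mult_left_mono)
  finally show ?case by simp
qed

lemma positive_op_blinfun_pow: "positive_op K A \<Longrightarrow> positive_op K (blinfun_pow A n)"
  by (induction n) (auto simp: positive_op_def)

lemma telescoping_blinfun_pow:
  "(\<Sum>k\<le>n. blinfun_pow T k u) - T (\<Sum>k\<le>n. blinfun_pow T k u) = u - blinfun_pow T (Suc n) u"
proof (induction n)
  case (Suc n)
  have "(\<Sum>k\<le>Suc n. blinfun_pow T k u) - T (\<Sum>k\<le>Suc n. blinfun_pow T k u)
      = ((\<Sum>k\<le>n. blinfun_pow T k u) - T (\<Sum>k\<le>n. blinfun_pow T k u))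
        + blinfun_pow T (Suc n) u - T (blinfun_pow T (Suc n) u)"
    by (simp add: blinfun.bilinear_simps)
  then show ?case using Suc by simp
qed simp

lemma
  assumes "summable (\<lambda>n. norm (F n :: 'a::real_normed_vector \<Rightarrow>\<^sub>L 'b::banach))"
  shows summable_blinfun_apply: "summable (\<lambda>n. F n x)"
    and suminf_blinfun_apply: "suminf F x = (\<Sum>n. F n x)"
proof -
  show "summable (\<lambda>n. F n x)"
  proof (rule summable_comparison_test)
    show "\<exists>N. \<forall>n\<ge>N. norm (F n x) \<le> norm (F n) * norm x"
      using norm_blinfun by blast
    show "summable (\<lambda>n. norm (F n) * norm x)"
      using assms by (rule summable_mult2)
  qed
  show "suminf F x = (\<Sum>n. F n x)"
    using bounded_linear.suminf[OF blinfun.bounded_linear_left summable_norm_cancel[OF assms]]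
    by simp
qed

context
  fixes A :: "'a::banach \<Rightarrow>\<^sub>L 'a"
  assumes summable: "summable (\<lambda>n. norm (blinfun_pow A n))"
begin

lemma
  shows neumann_series_left_inverse: "suminf (blinfun_pow A) (x - A x) = x"
    and neumann_series_right_inverse: "suminf (blinfun_pow A) x - A (suminf (blinfun_pow A) x) = x"
proof -
  have sx: "summable (\<lambda>n. blinfun_pow A n y)" for y
    by (rule summable_blinfun_apply[OF summable])
  have shift: "(\<Sum>n. blinfun_pow A (Suc n) y) = (\<Sum>n. blinfun_pow A n y) - y" for y
    using suminf_split_head[OF sx[of y]] by simp
  have "suminf (blinfun_pow A) (x - A x) = (\<Sum>n. blinfun_pow A n x) - (\<Sum>n. blinfun_pow A n (A x))"
    by (simp add: suminf_blinfun_apply[OF summable] blinfun.bilinear_simps)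
  also have "(\<Sum>n. blinfun_pow A n (A x)) = (\<Sum>n. blinfun_pow A (Suc n) x)"
    by (simp only: blinfun_pow_Suc_apply')
  finally show "suminf (blinfun_pow A) (x - A x) = x"
    unfolding shift by simp
  have "A (\<Sum>n. blinfun_pow A n x) = (\<Sum>n. blinfun_pow A (Suc n) x)"
    by (simp add: bounded_linear.suminf[OF blinfun.bounded_linear_right sx])
  then show "suminf (blinfun_pow A) x - A (suminf (blinfun_pow A) x) = x"
    unfolding suminf_blinfun_apply[OF summable] shift by simp
qed

lemma positive_op_neumann_series:
  assumes "ordered_cone K" "positive_op K A"
  shows "positive_op K (suminf (blinfun_pow A))"
  unfolding positive_op_def
proof clarify
  fix x assume "x \<in> K"
  then have "(\<Sum>n. blinfun_pow A n x) \<in> K"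
    using assms by (intro cone_suminf summable_blinfun_apply[OF summable])
      (auto intro: positive_opD positive_op_blinfun_pow)
  then show "suminf (blinfun_pow A) x \<in> K"
    by (simp add: suminf_blinfun_apply[OF summable])
qed

end

lemma summable_norm_blinfun_pow:
  "norm A < 1 \<Longrightarrow> summable (\<lambda>n. norm (blinfun_pow A n))"
proof (rule summable_comparison_test)
  show "\<exists>N. \<forall>n\<ge>N. norm (norm (blinfun_pow A n)) \<le> norm A ^ n"
    using norm_blinfun_pow_le by auto
qed (rule summable_geometric, simp)

lemma norm_neumann_series_le:
  fixes A :: "'a::banach \<Rightarrow>\<^sub>L 'a"
  assumes "norm A < 1"
  shows "norm (suminf (blinfun_pow A)) \<le> 1 / (1 - norm A)"
proof -
  have s: "summable (\<lambda>n. norm (blinfun_pow A n))" by (rule summable_norm_blinfun_pow[OF assms])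
  have g: "summable (\<lambda>n. norm A ^ n)" using assms by (intro summable_geometric) simp
  have "norm (suminf (blinfun_pow A)) \<le> (\<Sum>n. norm (blinfun_pow A n))"
    by (rule summable_norm[OF s])
  also have "\<dots> \<le> (\<Sum>n. norm A ^ n)"
    by (rule suminf_le[OF _ s g]) (simp add: norm_blinfun_pow_le)
  also have "\<dots> = 1 / (1 - norm A)"
    using suminf_geometric[of "norm A"] assms by simp
  finally show ?thesis .
qed

section \<open>Spectrum of the complexification\<close>

definition cplx_lift :: "('a::real_normed_vector \<Rightarrow>\<^sub>L 'a) \<Rightarrow> ('a \<times> 'a) \<Rightarrow>\<^sub>L ('a \<times> 'a)" where
  "cplx_lift A = Blinfun (\<lambda>p. (A (fst p), A (snd p)))"

definition cplx_scale :: "complex \<Rightarrow> ('a::real_normed_vector \<times> 'a) \<Rightarrow>\<^sub>L ('a \<times> 'a)" where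
  "cplx_scale w = Blinfun (\<lambda>p. (Re w *\<^sub>R fst p - Im w *\<^sub>R snd p, Im w *\<^sub>R fst p + Re w *\<^sub>R snd p))"

lemma cplx_lift_apply: "cplx_lift A p = (A (fst p), A (snd p))"
proof -
  have "bounded_linear (\<lambda>p. (A (fst p), A (snd p)))"
    by (intro bounded_linear_Pair bounded_linear_compose[OF blinfun.bounded_linear_right]
        bounded_linear_fst bounded_linear_snd)
  then show ?thesis unfolding cplx_lift_def by (simp add: bounded_linear_Blinfun_apply)
qed

lemma cplx_scale_apply:
  "cplx_scale w p = (Re w *\<^sub>R fst p - Im w *\<^sub>R snd p, Im w *\<^sub>R fst p + Re w *\<^sub>R snd p)"
proof -
  have "bounded_linear (\<lambda>p::'a \<times> 'a. c *\<^sub>R fst p)" "bounded_linear (\<lambda>p::'a \<times> 'a. c *\<^sub>R snd p)" for c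
    by (intro bounded_linear_compose[OF bounded_linear_scaleR_right]
        bounded_linear_fst bounded_linear_snd)+
  then have "bounded_linear (\<lambda>p::'a \<times> 'a.
      (Re w *\<^sub>R fst p - Im w *\<^sub>R snd p, Im w *\<^sub>R fst p + Re w *\<^sub>R snd p))"
    by (intro bounded_linear_Pair bounded_linear_sub bounded_linear_add)
  then show ?thesis unfolding cplx_scale_def by (simp add: bounded_linear_Blinfun_apply)
qed

lemma complexified_shift_eq: "complexified_shift T z = cplx_lift T - cplx_scale z"
proof -
  have "(\<lambda>(x, y). (T x - (Re z *\<^sub>R x - Im z *\<^sub>R y), T y - (Im z *\<^sub>R x + Re z *\<^sub>R y)))
      = (\<lambda>p. cplx_lift T p - cplx_scale z p)"
    by (auto simp: cplx_lift_apply cplx_scale_apply)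
  then show ?thesis
    by (simp add: complexified_shift_def blinfun.diff_left[symmetric] blinfun_apply_inverse)
qed

lemma cplx_scale_mult: "cplx_scale a o\<^sub>L cplx_scale b = cplx_scale (a * b)"
  by (rule blinfun_eqI) (simp add: cplx_scale_apply algebra_simps scaleR_add_left scaleR_diff_left)

lemma cplx_scale_1: "cplx_scale 1 = id_blinfun"
  by (rule blinfun_eqI) (simp add: cplx_scale_apply)

lemma cplx_scale_inverse: "z \<noteq> 0 \<Longrightarrow> cplx_scale z (cplx_scale (1 / z) p) = p"
  by (metis blinfun_apply_blinfun_compose cplx_scale_mult cplx_scale_1 blinfun_apply_id_blinfun
      divide_self_if times_divide_eq_right mult_1_right)

lemma norm_fst_snd_le: "norm (fst p) \<le> norm p" "norm (snd p) \<le> norm p"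
  by (metis norm_fst_le prod.collapse, metis norm_snd_le prod.collapse)

lemma norm_cplx_lift_le: "norm (cplx_lift A) \<le> 2 * norm A"
proof (rule norm_blinfun_bound)
  fix p :: "'a \<times> 'a"
  have "norm (cplx_lift A p) \<le> norm (A (fst p)) + norm (A (snd p))"
    by (simp add: cplx_lift_apply norm_Pair_le)
  also have "\<dots> \<le> norm A * norm p + norm A * norm p"
    by (intro add_mono order_trans[OF norm_blinfun] mult_left_mono norm_fst_snd_le) simp_all
  finally show "norm (cplx_lift A p) \<le> 2 * norm A * norm p" by (simp add: mult_ac)
qed simp

lemma norm_cplx_scale_le: "norm (cplx_scale w :: ('a::real_normed_vector \<times> 'a) \<Rightarrow>\<^sub>L _) \<le> 4 * cmod w"
proof (rule norm_blinfun_bound)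
  fix p :: "'a \<times> 'a"
  have coeff: "\<bar>c\<bar> * norm q \<le> cmod w * norm p"
    if "\<bar>c\<bar> \<le> cmod w" "norm q \<le> norm p" for c and q :: 'a
    using that by (intro mult_mono) auto
  have "norm (cplx_scale w p) \<le> norm (Re w *\<^sub>R fst p - Im w *\<^sub>R snd p)
    + norm (Im w *\<^sub>R fst p + Re w *\<^sub>R snd p)"
    by (simp add: cplx_scale_apply norm_Pair_le)
  also have "\<dots> \<le> (\<bar>Re w\<bar> * norm (fst p) + \<bar>Im w\<bar> * norm (snd p))
      + (\<bar>Im w\<bar> * norm (fst p) + \<bar>Re w\<bar> * norm (snd p))"
    by (intro add_mono order_trans[OF norm_triangle_ineq4] order_trans[OF norm_triangle_ineq])
      simp_all
  also have "\<dots> \<le> 4 * cmod w * norm p"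
    using coeff[OF abs_Re_le_cmod norm_fst_snd_le(1)] coeff[OF abs_Re_le_cmod norm_fst_snd_le(2)]
      coeff[OF abs_Im_le_cmod norm_fst_snd_le(1)] coeff[OF abs_Im_le_cmod norm_fst_snd_le(2)]
    by linarith
  finally show "norm (cplx_scale w p) \<le> 4 * cmod w * norm p" .
qed simp

lemma blinfun_pow_cplx:
  "blinfun_pow (cplx_scale c o\<^sub>L cplx_lift T) n =
    cplx_scale (c ^ n) o\<^sub>L cplx_lift (blinfun_pow T n)"
  by (induction n) (auto intro!: blinfun_eqI simp: cplx_scale_apply cplx_lift_apply
      blinfun.bilinear_simps algebra_simps scaleR_add_left scaleR_diff_left)

definition blinfun_invertible :: "('a::real_normed_vector \<Rightarrow>\<^sub>L 'a) \<Rightarrow> bool" where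
  "blinfun_invertible A \<longleftrightarrow> (\<exists>S. S o\<^sub>L A = id_blinfun \<and> A o\<^sub>L S = id_blinfun)"

lemma op_spectrum_iff: "z \<in> op_spectrum T \<longleftrightarrow> \<not> blinfun_invertible (complexified_shift T z)"
  unfolding op_spectrum_def blinfun_invertible_def by blast

lemma blinfun_invertibleE:
  fixes A :: "'a::real_normed_vector \<Rightarrow>\<^sub>L 'a"
  assumes "blinfun_invertible A"
  obtains S :: "'a \<Rightarrow>\<^sub>L 'a" where "\<And>x. S (A x) = x" "\<And>x. A (S x) = x"
  using assms unfolding blinfun_invertible_def
  by (metis blinfun_apply_blinfun_compose blinfun_apply_id_blinfun)

lemma blinfun_invertibleI:
  fixes A S :: "'a::real_normed_vector \<Rightarrow>\<^sub>L 'a"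
  shows "(\<And>x. S (A x) = x) \<Longrightarrow> (\<And>x. A (S x) = x) \<Longrightarrow> blinfun_invertible A"
  unfolding blinfun_invertible_def
  by (metis blinfun_eqI blinfun_apply_blinfun_compose blinfun_apply_id_blinfun)

lemma blinfun_invertible_compose:
  fixes A B :: "'a::real_normed_vector \<Rightarrow>\<^sub>L 'a"
  assumes "blinfun_invertible A" "blinfun_invertible B"
  shows "blinfun_invertible (A o\<^sub>L B)"
proof -
  obtain S :: "'a \<Rightarrow>\<^sub>L 'a" where "\<And>x. S (A x) = x" "\<And>x. A (S x) = x"
    using assms(1) by (elim blinfun_invertibleE) blast
  moreover obtain U :: "'a \<Rightarrow>\<^sub>L 'a" where "\<And>x. U (B x) = x" "\<And>x. B (U x) = x"
    using assms(2) by (elim blinfun_invertibleE) blast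
  ultimately show ?thesis by (intro blinfun_invertibleI[of "U o\<^sub>L S"]) simp_all
qed

lemma blinfun_invertible_uminus:
  fixes A :: "'a::real_normed_vector \<Rightarrow>\<^sub>L 'a"
  assumes "blinfun_invertible A" shows "blinfun_invertible (- A)"
proof -
  obtain S :: "'a \<Rightarrow>\<^sub>L 'a" where "\<And>x. S (A x) = x" "\<And>x. A (S x) = x"
    using assms by (elim blinfun_invertibleE) blast
  then show ?thesis by (intro blinfun_invertibleI[of "- S"]) (simp_all add: blinfun.bilinear_simps)
qed

lemma blinfun_invertible_cplx_scale: "z \<noteq> 0 \<Longrightarrow> blinfun_invertible (cplx_scale z)"
  using cplx_scale_inverse[of "1 / z"] cplx_scale_inverse[of z]
  by (intro blinfun_invertibleI[of "cplx_scale (1 / z)"]) simp_all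

lemma blinfun_invertible_neumann:
  fixes A :: "'a::banach \<Rightarrow>\<^sub>L 'a"
  assumes "summable (\<lambda>n. norm (blinfun_pow A n))"
  shows "blinfun_invertible (id_blinfun - A)"
  by (rule blinfun_invertibleI[of "suminf (blinfun_pow A)"])
    (simp_all add: blinfun.diff_left neumann_series_left_inverse[OF assms]
      neumann_series_right_inverse[OF assms])

lemma complexified_shift_factor:
  assumes "z \<noteq> 0"
  shows "complexified_shift T z =
    - (cplx_scale z o\<^sub>L (id_blinfun - (cplx_scale (1 / z) o\<^sub>L cplx_lift T)))"
  by (rule blinfun_eqI)
    (simp add: complexified_shift_eq blinfun.bilinear_simps cplx_scale_inverse[OF assms])

lemma op_spectrum_norm_le_of_pow_bound:
  fixes T :: "'a::banach \<Rightarrow>\<^sub>L 'a"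
  assumes bound: "\<And>n. norm (blinfun_pow T n) \<le> B * \<rho> ^ n" and "0 \<le> \<rho>"
    and z: "z \<in> op_spectrum T"
  shows "cmod z \<le> \<rho>"
proof (rule ccontr)
  assume "\<not> cmod z \<le> \<rho>"
  then have z0: "z \<noteq> 0" and q: "norm (\<rho> / cmod z) < 1"
    using \<open>0 \<le> \<rho>\<close> by (auto simp: divide_less_eq)
  define A :: "('a \<times> 'a) \<Rightarrow>\<^sub>L ('a \<times> 'a)" where "A = cplx_scale (1 / z) o\<^sub>L cplx_lift T"
  have "norm (blinfun_pow A n) \<le> 8 * B * (\<rho> / cmod z) ^ n" for n
  proof -
    have "norm (blinfun_pow A n)
        \<le> norm (cplx_scale ((1 / z) ^ n) :: ('a \<times> 'a) \<Rightarrow>\<^sub>L _) * norm (cplx_lift (blinfun_pow T n))"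
      unfolding A_def blinfun_pow_cplx by (rule norm_blinfun_compose)
    also have "\<dots> \<le> (4 * (1 / cmod z) ^ n) * (2 * (B * \<rho> ^ n))"
      by (intro mult_mono order_trans[OF norm_cplx_scale_le] order_trans[OF norm_cplx_lift_le])
        (auto simp: norm_power norm_divide bound)
    finally show ?thesis by (simp add: power_divide)
  qed
  then have "summable (\<lambda>n. norm (blinfun_pow A n))"
    by (intro summable_comparison_test[OF _ summable_mult[OF summable_geometric[OF q]]]) auto
  then have "blinfun_invertible (complexified_shift T z)"
    unfolding complexified_shift_factor[OF z0, of T] A_def[symmetric]
    by (intro blinfun_invertible_uminus blinfun_invertible_compose
        blinfun_invertible_cplx_scale[OF z0] blinfun_invertible_neumann)
  with z show False by (simp add: op_spectrum_iff)
qed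

lemma op_spectrum_norm_le: "z \<in> op_spectrum T \<Longrightarrow> cmod z \<le> norm T"
  using op_spectrum_norm_le_of_pow_bound[of T 1 "norm T" z] norm_blinfun_pow_le[of T] by force

lemma op_spectrum_norm_le_spectral_radius:
  assumes "z \<in> op_spectrum T" shows "cmod z \<le> spectral_radius T"
proof -
  have "bdd_above (cmod ` op_spectrum T)"
    using op_spectrum_norm_le[of _ T] by (auto intro!: bdd_aboveI[where M="norm T"])
  then show ?thesis using assms by (auto simp: spectral_radius_def intro!: cSup_upper)
qed

lemma spectral_radius_le_of_pow_bound:
  fixes T :: "'a::banach \<Rightarrow>\<^sub>L 'a"
  assumes "\<And>n. norm (blinfun_pow T n) \<le> B * \<rho> ^ n" and "0 \<le> \<rho>"
  shows "spectral_radius T \<le> \<rho>"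
  using op_spectrum_norm_le_of_pow_bound[OF assms]
  by (auto simp: spectral_radius_def assms(2) intro!: cSup_least)

section \<open>Uniform boundedness\<close>

lemma norm_blinfun_le_of_ball_bound:
  fixes F :: "'a::real_normed_vector \<Rightarrow>\<^sub>L 'b::real_normed_vector"
  assumes "e > 0" and bound: "\<And>w. w \<in> ball x0 e \<Longrightarrow> norm (F w) \<le> M"
  shows "norm F \<le> 4 * M / e"
proof (rule norm_blinfun_bound)
  have "0 \<le> M" using bound[of x0] \<open>e > 0\<close> by (simp add: order_trans[OF norm_ge_zero])
  then show "0 \<le> 4 * M / e" using \<open>e > 0\<close> by simp
  fix w
  show "norm (F w) \<le> 4 * M / e * norm w"
  proof (cases "w = 0")
    case False
    define t where "t = e / (2 * norm w)"
    have t: "t > 0" "norm (t *\<^sub>R w) < e" using \<open>e > 0\<close> False by (simp_all add: t_def)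
    have "t * norm (F w) = norm (F (x0 + t *\<^sub>R w) - F x0)"
      using t by (simp add: blinfun.bilinear_simps)
    also have "\<dots> \<le> norm (F (x0 + t *\<^sub>R w)) + norm (F x0)"
      by (rule norm_triangle_ineq4)
    also have "\<dots> \<le> 2 * M"
      using bound[of "x0 + t *\<^sub>R w"] bound[of x0] t \<open>e > 0\<close> by (simp add: dist_norm)
    finally show ?thesis
      using t False \<open>e > 0\<close> by (simp add: t_def field_simps)
  qed simp
qed

lemma uniform_boundedness:
  fixes F :: "'i \<Rightarrow> 'a::banach \<Rightarrow>\<^sub>L 'b::real_normed_vector"
  assumes pointwise: "\<And>x. \<exists>M. \<forall>i. norm (F i x) \<le> M"
  shows "\<exists>B. \<forall>i. norm (F i) \<le> B"
proof -
  define G where "G m = {x. \<forall>i. norm (F i x) \<le> real m}" for m :: nat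
  have closed: "closed (G m)" for m
    unfolding G_def Collect_all_eq by (intro closed_INT ballI closed_Collect_le continuous_intros)
  have cover: "\<Union> (range G) = UNIV"
  proof safe
    fix x
    obtain M where "\<forall>i. norm (F i x) \<le> M" using pointwise by blast
    moreover obtain m :: nat where "M \<le> real m" using real_arch_simple by blast
    ultimately have "x \<in> G m" by (auto simp: G_def intro: order_trans)
    then show "x \<in> \<Union> (range G)" by blast
  qed auto
  have "\<exists>m. interior (G m) \<noteq> {}"
  proof (rule ccontr)
    assume "\<not> ?thesis"
    then have "euclidean interior_of \<Union> (range G) = {}"
      by (intro Baire_category_alt) (auto simp: completely_metrizable_space_euclidean closed)
    with cover show False by simp
  qed
  then obtain m x0 e where "e > 0" "ball x0 e \<subseteq> G m"
    by (auto simp: mem_interior)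
  then have "norm (F i) \<le> 4 * real m / e" for i
    by (intro norm_blinfun_le_of_ball_bound) (auto simp: G_def)
  then show ?thesis by blast
qed

lemma uniform_bound_of_cone_bound:
  fixes F :: "'i \<Rightarrow> 'a::banach \<Rightarrow>\<^sub>L 'b::real_normed_vector"
  assumes gen: "generating_cone K" and bound: "\<And>i u. u \<in> K \<Longrightarrow> norm (F i u) \<le> D * norm u"
  shows "\<exists>B. \<forall>i. norm (F i) \<le> B"
proof (rule uniform_boundedness)
  fix w
  obtain p q where "p \<in> K" "q \<in> K" "w = p - q"
    using gen unfolding generating_cone_def by blast
  then have "norm (F i w) \<le> D * norm p + D * norm q" for i
    using bound[of p i] bound[of q i] norm_triangle_ineq4[of "F i p" "F i q"]
    by (simp add: blinfun.diff_right)
  then show "\<exists>M. \<forall>i. norm (F i w) \<le> M" by blast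
qed

section \<open>Positive functionals\<close>

definition sublinear :: "('a::real_vector \<Rightarrow> real) \<Rightarrow> bool" where
  "sublinear p \<longleftrightarrow> (\<forall>a b. p (a + b) \<le> p a + p b) \<and> (\<forall>r a. r > 0 \<longrightarrow> p (r *\<^sub>R a) = r * p a)"

lemma sublinear_add: "sublinear p \<Longrightarrow> p (a + b) \<le> p a + p b"
  unfolding sublinear_def by blast

lemma sublinear_scaleR: "sublinear p \<Longrightarrow> r > 0 \<Longrightarrow> p (r *\<^sub>R a) = r * p a"
  unfolding sublinear_def by blast

lemma sublinear_zero: "sublinear p \<Longrightarrow> p 0 = 0"
  using sublinear_scaleR[of p 2 0] by simp

lemma sublinear_scaleR_nonneg: "sublinear p \<Longrightarrow> r \<ge> 0 \<Longrightarrow> p (r *\<^sub>R a) = r * p a"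
  by (cases "r = 0") (auto simp: sublinear_zero sublinear_scaleR)

lemma sublinear_neg_le: "sublinear p \<Longrightarrow> - p (- a) \<le> p a"
  using sublinear_add[of p a "- a"] sublinear_zero[of p] by simp

lemma sublinearI:
  assumes add: "\<And>a b. p (a + b) \<le> p a + p b"
    and scale: "\<And>r a. r > 0 \<Longrightarrow> p (r *\<^sub>R a) \<le> r * p a"
  shows "sublinear p"
  unfolding sublinear_def
proof (intro conjI allI impI add antisym scale)
  fix r :: real and a assume "r > 0"
  have "p a = p ((1 / r) *\<^sub>R (r *\<^sub>R a))" using \<open>r > 0\<close> by simp
  also have "\<dots> \<le> (1 / r) * p (r *\<^sub>R a)" using \<open>r > 0\<close> by (intro scale) simp
  finally show "r * p a \<le> p (r *\<^sub>R a)" using \<open>r > 0\<close> by (simp add: field_simps)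
qed

text \<open>Lowering a sublinear \<open>p\<close> in the direction \<open>w\<close> gives a sublinear functional below \<open>p\<close>
  whose value at \<open>- w\<close> is at most \<open>- p w\<close>. A sublinear functional that no such lowering
  decreases is therefore linear; with Zorn's lemma this yields the Hahn-Banach theorem.\<close>

definition sublinear_lower :: "('a::real_vector \<Rightarrow> real) \<Rightarrow> 'a \<Rightarrow> 'a \<Rightarrow> real" where
  "sublinear_lower p w v = (INF t\<in>{0..}. p (v + t *\<^sub>R w) - t * p w)"

context
  fixes p :: "'a::real_vector \<Rightarrow> real"
  assumes p: "sublinear p"
begin

lemma sublinear_lower_le_at: "t \<ge> 0 \<Longrightarrow> sublinear_lower p w v \<le> p (v + t *\<^sub>R w) - t * p w"
  unfolding sublinear_lower_def
proof (rule cINF_lower)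
  show "bdd_below ((\<lambda>t. p (v + t *\<^sub>R w) - t * p w) ` {0..})"
  proof (rule bdd_belowI2[where m="- p (- v)"])
    fix t :: real assume "t \<in> {0..}"
    have "p (t *\<^sub>R w) \<le> p (v + t *\<^sub>R w) + p (- v)"
      using sublinear_add[OF p, of "v + t *\<^sub>R w" "- v"] by simp
    then show "- p (- v) \<le> p (v + t *\<^sub>R w) - t * p w"
      using sublinear_scaleR_nonneg[OF p, of t w] \<open>t \<in> {0..}\<close> by simp
  qed
qed simp

lemma sublinear_lower_greatest:
  "(\<And>t. t \<ge> 0 \<Longrightarrow> m \<le> p (v + t *\<^sub>R w) - t * p w) \<Longrightarrow> m \<le> sublinear_lower p w v"
  unfolding sublinear_lower_def by (rule cINF_greatest) auto

lemma sublinear_lower_le: "sublinear_lower p w v \<le> p v"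
  using sublinear_lower_le_at[of 0] by simp

lemma sublinear_lower_neg: "sublinear_lower p w (- w) \<le> - p w"
  using sublinear_lower_le_at[of 1 w "- w"] sublinear_zero[OF p] by simp

lemma sublinear_sublinear_lower: "sublinear (sublinear_lower p w)"
proof (rule sublinearI)
  fix a b
  have "sublinear_lower p w (a + b) - (p (b + t *\<^sub>R w) - t * p w) \<le> sublinear_lower p w a"
    if "t \<ge> 0" for t
  proof (rule sublinear_lower_greatest)
    fix s :: real assume "s \<ge> 0"
    have "sublinear_lower p w (a + b) \<le> p ((a + s *\<^sub>R w) + (b + t *\<^sub>R w)) - (s + t) * p w"
      using sublinear_lower_le_at[of "s + t" w "a + b"] \<open>s \<ge> 0\<close> \<open>t \<ge> 0\<close>
      by (simp add: algebra_simps scaleR_add_left)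
    also have "\<dots> \<le> p (a + s *\<^sub>R w) + p (b + t *\<^sub>R w) - (s + t) * p w"
      using sublinear_add[OF p] by simp
    finally show "sublinear_lower p w (a + b) - (p (b + t *\<^sub>R w) - t * p w)
        \<le> p (a + s *\<^sub>R w) - s * p w"
      by (simp add: algebra_simps)
  qed
  then have "sublinear_lower p w (a + b) - sublinear_lower p w a \<le> sublinear_lower p w b"
    by (intro sublinear_lower_greatest) (simp add: algebra_simps)
  then show "sublinear_lower p w (a + b) \<le> sublinear_lower p w a + sublinear_lower p w b"
    by simp
next
  fix r :: real and a assume "r > 0"
  have "sublinear_lower p w (r *\<^sub>R a) / r \<le> sublinear_lower p w a"
  proof (rule sublinear_lower_greatest)
    fix t :: real assume "t \<ge> 0"
    have "sublinear_lower p w (r *\<^sub>R a) \<le> p (r *\<^sub>R a + (r * t) *\<^sub>R w) - (r * t) * p w"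
      using \<open>r > 0\<close> \<open>t \<ge> 0\<close> by (intro sublinear_lower_le_at) simp
    also have "p (r *\<^sub>R a + (r * t) *\<^sub>R w) = r * p (a + t *\<^sub>R w)"
      using sublinear_scaleR[OF p \<open>r > 0\<close>, of "a + t *\<^sub>R w"] by (simp add: scaleR_add_right)
    also have "r * p (a + t *\<^sub>R w) - (r * t) * p w = r * (p (a + t *\<^sub>R w) - t * p w)"
      by (simp add: algebra_simps)
    finally show "sublinear_lower p w (r *\<^sub>R a) / r \<le> p (a + t *\<^sub>R w) - t * p w"
      using \<open>r > 0\<close> by (simp add: divide_le_eq mult.commute)
  qed
  then show "sublinear_lower p w (r *\<^sub>R a) \<le> r * sublinear_lower p w a"
    using \<open>r > 0\<close> by (simp add: divide_le_eq mult.commute)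
qed

lemma linear_if_sublinear_lower_eq:
  assumes eq: "\<And>w. sublinear_lower p w = p"
  shows "linear p"
proof -
  have neg: "p (- w) = - p w" for w
    using sublinear_lower_neg[of w] sublinear_neg_le[OF p, of "- w"] eq[of w] by simp
  show ?thesis
  proof (rule linearI)
    fix a b
    have "- p (a + b) = p (- a + - b)" by (simp add: neg[symmetric])
    also have "\<dots> \<le> - p a - p b" using sublinear_add[OF p, of "- a" "- b"] by (simp add: neg)
    finally show "p (a + b) = p a + p b" using sublinear_add[OF p, of a b] by simp
  next
    fix r :: real and a
    show "p (r *\<^sub>R a) = r *\<^sub>R p a"
      using sublinear_scaleR_nonneg[OF p, of r a] sublinear_scaleR_nonneg[OF p, of "- r" a]
        neg[of "(- r) *\<^sub>R a"]
      by (cases "r \<ge> 0") auto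
  qed
qed

end

lemma sublinear_INF_chain:
  fixes p :: "'a::real_vector \<Rightarrow> real"
  assumes "C \<noteq> {}" and sub: "\<And>q. q \<in> C \<Longrightarrow> sublinear q" and le: "\<And>q. q \<in> C \<Longrightarrow> q \<le> p"
    and chain: "\<And>q q'. q \<in> C \<Longrightarrow> q' \<in> C \<Longrightarrow> q \<le> q' \<or> q' \<le> q"
  shows "sublinear (\<lambda>v. INF q\<in>C. q v)" and "\<And>q. q \<in> C \<Longrightarrow> (\<lambda>v. INF q\<in>C. q v) \<le> q"
proof -
  have bdd: "bdd_below ((\<lambda>q. q v) ` C)" for v
  proof (rule bdd_belowI2[where m="- p (- v)"])
    fix q assume "q \<in> C"
    then show "- p (- v) \<le> q v"
      using sublinear_neg_le[OF sub, of q v] le[of q]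
      by (auto simp: le_fun_def intro: order_trans[rotated])
  qed
  have lower: "(INF q\<in>C. q v) \<le> q v" if "q \<in> C" for q v
    using that by (rule cINF_lower[OF bdd])
  then show "\<And>q. q \<in> C \<Longrightarrow> (\<lambda>v. INF q\<in>C. q v) \<le> q" by (simp add: le_fun_def)
  have greatest: "m \<le> (INF q\<in>C. q v)" if "\<And>q. q \<in> C \<Longrightarrow> m \<le> q v" for m v
    using \<open>C \<noteq> {}\<close> that by (rule cINF_greatest)
  show "sublinear (\<lambda>v. INF q\<in>C. q v)"
  proof (rule sublinearI)
    fix a b
    have "(INF q\<in>C. q (a + b)) \<le> q a + q' b" if "q \<in> C" "q' \<in> C" for q q'
    proof -
      have "\<exists>q''\<in>C. q'' \<le> q \<and> q'' \<le> q'" using chain[OF that] that by auto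
      then obtain q'' where "q'' \<in> C" "q'' \<le> q" "q'' \<le> q'" by blast
      then have "(INF q\<in>C. q (a + b)) \<le> q'' a + q'' b"
        using lower[OF \<open>q'' \<in> C\<close>, of "a + b"] sublinear_add[OF sub[OF \<open>q'' \<in> C\<close>], of a b]
        by linarith
      also have "\<dots> \<le> q a + q' b"
        using \<open>q'' \<le> q\<close> \<open>q'' \<le> q'\<close> by (intro add_mono) (auto simp: le_fun_def)
      finally show ?thesis .
    qed
    then have "(INF q\<in>C. q (a + b)) - q' b \<le> (INF q\<in>C. q a)" if "q' \<in> C" for q'
      using that by (intro greatest) (simp add: algebra_simps)
    then have "(INF q\<in>C. q (a + b)) - (INF q\<in>C. q a) \<le> (INF q\<in>C. q b)"
      by (intro greatest) (simp add: algebra_simps)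
    then show "(INF q\<in>C. q (a + b)) \<le> (INF q\<in>C. q a) + (INF q\<in>C. q b)"
      by simp
  next
    fix r :: real and a assume "r > 0"
    have "(INF q\<in>C. q (r *\<^sub>R a)) / r \<le> q a" if "q \<in> C" for q
      using lower[OF that, of "r *\<^sub>R a"] sublinear_scaleR[OF sub[OF that] \<open>r > 0\<close>] \<open>r > 0\<close>
      by (simp add: divide_le_eq mult.commute)
    then have "(INF q\<in>C. q (r *\<^sub>R a)) / r \<le> (INF q\<in>C. q a)"
      by (rule greatest)
    then show "(INF q\<in>C. q (r *\<^sub>R a)) \<le> r * (INF q\<in>C. q a)"
      using \<open>r > 0\<close> by (simp add: divide_le_eq mult.commute)
  qed
qed

lemma exists_minimal_sublinear_below:
  fixes p :: "'a::real_vector \<Rightarrow> real"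
  assumes p: "sublinear p"
  obtains m where "sublinear m" "m \<le> p" "m (- x) \<le> - p x"
    "\<And>q. sublinear q \<Longrightarrow> q \<le> m \<Longrightarrow> q = m"
proof -
  define A where "A = {q. sublinear q \<and> q \<le> p \<and> q (- x) \<le> - p x}"
  have po: "partial_order_on A (relation_of (\<ge>) A)"
    by (rule partial_order_on_relation_ofI) (auto intro: order_trans antisym)
  have "\<exists>u\<in>A. \<forall>q\<in>C. u \<le> q" if C: "C \<in> Chains (relation_of (\<ge>) A)" for C
  proof (cases "C = {}")
    case True
    have "sublinear_lower p x \<in> A"
      using sublinear_sublinear_lower[OF p] sublinear_lower_le[OF p] sublinear_lower_neg[OF p]
      by (simp add: A_def le_fun_def)
    with True show ?thesis by blast
  next
    case False
    have CA: "C \<subseteq> A" using C unfolding Chains_def relation_of_def by blast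
    then have sub: "\<And>q. q \<in> C \<Longrightarrow> sublinear q" and le: "\<And>q. q \<in> C \<Longrightarrow> q \<le> p"
      by (auto simp: A_def)
    have chain: "q \<le> q' \<or> q' \<le> q" if "q \<in> C" "q' \<in> C" for q q'
      using C that unfolding Chains_def relation_of_def by blast
    define u where "u = (\<lambda>v. INF q\<in>C. q v)"
    note inf = sublinear_INF_chain[OF False sub le chain, folded u_def]
    obtain q0 where "q0 \<in> C" using False by blast
    then have "u \<le> q0" "q0 \<in> A" using inf(2) CA by auto
    then have "u \<in> A"
      using inf(1) by (auto simp: A_def le_fun_def intro: order_trans)
    then show ?thesis using inf(2) by blast
  qed
  then obtain m where m: "m \<in> A" and minimal: "\<And>q. q \<in> A \<Longrightarrow> q \<le> m \<Longrightarrow> q = m"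
    using predicate_Zorn[OF po] by blast
  have "q = m" if "sublinear q" "q \<le> m" for q
    using m that by (intro minimal) (auto simp: A_def le_fun_def intro: order_trans)
  with m show ?thesis using that by (auto simp: A_def)
qed

lemma sublinear_supporting_linear:
  fixes p :: "'a::real_vector \<Rightarrow> real"
  assumes p: "sublinear p"
  shows "\<exists>m. linear m \<and> m \<le> p \<and> m x = p x"
proof -
  obtain m where m: "sublinear m" "m \<le> p" "m (- x) \<le> - p x"
    and minimal: "\<And>q. sublinear q \<Longrightarrow> q \<le> m \<Longrightarrow> q = m"
    using exists_minimal_sublinear_below[OF p] by blast
  have "sublinear_lower m w = m" for w
    using sublinear_sublinear_lower[OF m(1)] sublinear_lower_le[OF m(1)]
    by (intro minimal) (simp_all add: le_fun_def)
  then have "linear m" by (rule linear_if_sublinear_lower_eq[OF m(1)])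
  moreover have "m x = p x"
    using m(2,3) linear_neg[OF \<open>linear m\<close>, of x] by (auto simp: le_fun_def intro: antisym)
  ultimately show ?thesis using m(2) by blast
qed

definition dist_neg_cone :: "'a::real_normed_vector set \<Rightarrow> 'a \<Rightarrow> real" where
  "dist_neg_cone K w = (INF k\<in>K. norm (w + k))"

lemma dist_neg_cone_le: "k \<in> K \<Longrightarrow> dist_neg_cone K w \<le> norm (w + k)"
  unfolding dist_neg_cone_def by (rule cINF_lower) (auto intro: bdd_belowI2[where m=0])

lemma dist_neg_cone_greatest:
  "K \<noteq> {} \<Longrightarrow> (\<And>k. k \<in> K \<Longrightarrow> m \<le> norm (w + k)) \<Longrightarrow> m \<le> dist_neg_cone K w"
  unfolding dist_neg_cone_def by (rule cINF_greatest)

lemma sublinear_dist_neg_cone: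
  assumes cone: "ordered_cone K" shows "sublinear (dist_neg_cone K)"
proof (rule sublinearI)
  note greatest = dist_neg_cone_greatest[OF cone_nonempty[OF cone]]
  fix a b
  have "dist_neg_cone K (a + b) - norm (b + k') \<le> dist_neg_cone K a" if "k' \<in> K" for k'
  proof (rule greatest)
    fix k assume "k \<in> K"
    have "dist_neg_cone K (a + b) \<le> norm ((a + k) + (b + k'))"
      using dist_neg_cone_le[OF cone_add[OF cone \<open>k \<in> K\<close> \<open>k' \<in> K\<close>], of "a + b"]
      by (simp add: algebra_simps)
    also have "\<dots> \<le> norm (a + k) + norm (b + k')" by (rule norm_triangle_ineq)
    finally show "dist_neg_cone K (a + b) - norm (b + k') \<le> norm (a + k)" by simp
  qed
  then have "dist_neg_cone K (a + b) - dist_neg_cone K a \<le> dist_neg_cone K b"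
    by (intro greatest) (simp add: algebra_simps)
  then show "dist_neg_cone K (a + b) \<le> dist_neg_cone K a + dist_neg_cone K b" by simp
next
  note greatest = dist_neg_cone_greatest[OF cone_nonempty[OF cone]]
  fix r :: real and a assume "r > 0"
  have "dist_neg_cone K (r *\<^sub>R a) / r \<le> dist_neg_cone K a"
  proof (rule greatest)
    fix k assume "k \<in> K"
    have "dist_neg_cone K (r *\<^sub>R a) \<le> norm (r *\<^sub>R (a + k))"
      using dist_neg_cone_le[OF cone_scaleR[OF cone _ \<open>k \<in> K\<close>], of r "r *\<^sub>R a"] \<open>r > 0\<close>
      by (simp add: scaleR_add_right)
    then show "dist_neg_cone K (r *\<^sub>R a) / r \<le> norm (a + k)"
      using \<open>r > 0\<close> by (simp add: divide_le_eq mult.commute)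
  qed
  then show "dist_neg_cone K (r *\<^sub>R a) \<le> r * dist_neg_cone K a"
    using \<open>r > 0\<close> by (simp add: divide_le_eq mult.commute)
qed

lemma positive_functional_norming:
  fixes K :: "'a::banach set"
  assumes cone: "ordered_cone K" and "C > 0"
    and normal: "\<And>x y. x \<in> K \<Longrightarrow> y - x \<in> K \<Longrightarrow> norm x \<le> C * norm y"
    and x: "x \<in> K"
  obtains \<phi> where "bounded_linear \<phi>" "\<And>w. \<bar>\<phi> w\<bar> \<le> norm w" "\<And>k. k \<in> K \<Longrightarrow> \<phi> k \<ge> 0"
    "norm x \<le> C * \<phi> x"
proof -
  obtain \<phi> where "linear \<phi>" and le: "\<phi> \<le> dist_neg_cone K" and at_x: "\<phi> x = dist_neg_cone K x"
    using sublinear_supporting_linear[OF sublinear_dist_neg_cone[OF cone]] by blast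
  have le_norm: "\<phi> v \<le> norm v" for v
    using le dist_neg_cone_le[OF cone_zero[OF cone], of v]
    by (auto simp: le_fun_def intro: order_trans)
  have "\<bar>\<phi> w\<bar> \<le> norm w" for w
    using le_norm[of w] le_norm[of "- w"] linear_neg[OF \<open>linear \<phi>\<close>, of w] by (simp add: abs_le_iff)
  moreover have "bounded_linear \<phi>"
    using \<open>linear \<phi>\<close> calculation
    by (intro bounded_linear_intro[where K=1]) (simp_all add: linear_add linear_scale)
  moreover have "\<phi> k \<ge> 0" if "k \<in> K" for k
    using le[unfolded le_fun_def, rule_format, of "- k"] dist_neg_cone_le[OF that, of "- k"]
      linear_neg[OF \<open>linear \<phi>\<close>, of k]
    by simp
  moreover have "norm x \<le> C * \<phi> x"
  proof -
    have "norm x / C \<le> dist_neg_cone K x"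
      using normal[OF x] cone_add[OF cone x] \<open>C > 0\<close>
      by (intro dist_neg_cone_greatest[OF cone_nonempty[OF cone]])
        (simp add: divide_le_eq mult.commute)
    then show ?thesis using \<open>C > 0\<close> at_x by (simp add: divide_le_eq mult.commute)
  qed
  ultimately show ?thesis using that by blast
qed

section \<open>Resolvents\<close>

definition is_resolvent :: "('a::real_normed_vector \<Rightarrow>\<^sub>L 'a) \<Rightarrow> real \<Rightarrow> ('a \<Rightarrow>\<^sub>L 'a) \<Rightarrow> bool" where
  "is_resolvent T l R \<longleftrightarrow> (\<forall>x. R (l *\<^sub>R x - T x) = x) \<and> (\<forall>x. l *\<^sub>R R x - T (R x) = x)"

definition has_positive_resolvent :: "'a::banach set \<Rightarrow> ('a \<Rightarrow>\<^sub>L 'a) \<Rightarrow> real \<Rightarrow> bool" where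
  "has_positive_resolvent K T l \<longleftrightarrow> (\<exists>R. is_resolvent T l R \<and> positive_op K R)"

lemma is_resolvent_unique:
  assumes "is_resolvent T l R" "is_resolvent T l R'" shows "R = R'"
proof (rule blinfun_eqI)
  fix x
  have "R x = R (l *\<^sub>R R' x - T (R' x))" using assms(2) by (simp add: is_resolvent_def)
  also have "\<dots> = R' x" using assms(1) by (simp add: is_resolvent_def)
  finally show "R x = R' x" .
qed

lemma is_resolvent_if_not_in_op_spectrum:
  fixes T :: "'a::banach \<Rightarrow>\<^sub>L 'a"
  assumes "complex_of_real l \<notin> op_spectrum T"
  obtains R where "is_resolvent T l R"
proof -
  let ?A = "complexified_shift T (complex_of_real l)"
  have "blinfun_invertible ?A" using assms by (simp add: op_spectrum_iff)
  then obtain S :: "('a \<times> 'a) \<Rightarrow>\<^sub>L ('a \<times> 'a)" where S: "\<And>p. S (?A p) = p" "\<And>p. ?A (S p) = p"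
    by (elim blinfun_invertibleE) blast
  have A: "?A p = (T (fst p) - l *\<^sub>R fst p, T (snd p) - l *\<^sub>R snd p)" for p
    by (simp add: complexified_shift_eq cplx_lift_apply cplx_scale_apply blinfun.bilinear_simps)
  have "bounded_linear (\<lambda>x. - fst (S (x, 0)))"
    by (intro bounded_linear_minus bounded_linear_compose[OF bounded_linear_fst]
        bounded_linear_compose[OF blinfun.bounded_linear_right]
        bounded_linear_Pair bounded_linear_ident bounded_linear_zero)
  then have R: "Blinfun (\<lambda>x. - fst (S (x, 0))) x = - fst (S (x, 0))" for x
    by (simp add: bounded_linear_Blinfun_apply)
  have "(l *\<^sub>R x - T x, 0) = ?A (- x, 0)" for x
    by (simp add: A blinfun.bilinear_simps)
  then have "S (l *\<^sub>R x - T x, 0) = (- x, 0)" for x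
    by (simp only: S(1))
  moreover have "fst (?A (S (x, 0))) = x" for x by (simp add: S(2))
  ultimately have "is_resolvent T l (Blinfun (\<lambda>x. - fst (S (x, 0))))"
    unfolding is_resolvent_def R by (simp add: A blinfun.bilinear_simps algebra_simps)
  then show ?thesis by (rule that)
qed

context
  fixes T R :: "'a::banach \<Rightarrow>\<^sub>L 'a" and l d :: real
  assumes R: "is_resolvent T l R" and small: "\<bar>d\<bar> * norm R < 1"
begin

lemma is_resolvent_shift: "is_resolvent T (l - d) (R o\<^sub>L suminf (blinfun_pow (d *\<^sub>R R)))"
proof -
  let ?N = "suminf (blinfun_pow (d *\<^sub>R R))"
  have sum: "summable (\<lambda>n. norm (blinfun_pow (d *\<^sub>R R) n))"
    using small by (intro summable_norm_blinfun_pow) simp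
  have N1: "?N (x - d *\<^sub>R R x) = x" and N2: "?N x - d *\<^sub>R R (?N x) = x" for x
    using neumann_series_left_inverse[OF sum, of x] neumann_series_right_inverse[OF sum, of x]
    by (auto simp: blinfun.scaleR_left)
  have R1: "R (l *\<^sub>R x - T x) = x" and R2: "l *\<^sub>R R x - T (R x) = x" for x
    using R by (auto simp: is_resolvent_def)
  have shift: "(l - d) *\<^sub>R x - T x = (l *\<^sub>R x - T x) - d *\<^sub>R R (l *\<^sub>R x - T x)" for x
    by (simp add: R1 algebra_simps)
  have "R (?N ((l - d) *\<^sub>R x - T x)) = x" for x
    unfolding shift N1 by (rule R1)
  moreover have "(l - d) *\<^sub>R R y - T (R y) = y - d *\<^sub>R R y" for y
    using R2[of y] by (simp add: algebra_simps)
  then have "(l - d) *\<^sub>R R (?N x) - T (R (?N x)) = x" for x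
    by (simp only: N2)
  ultimately show ?thesis
    unfolding is_resolvent_def blinfun_apply_blinfun_compose by blast
qed

lemma norm_resolvent_shift_le:
  "norm (R o\<^sub>L suminf (blinfun_pow (d *\<^sub>R R))) \<le> norm R / (1 - \<bar>d\<bar> * norm R)"
proof -
  have "norm (R o\<^sub>L suminf (blinfun_pow (d *\<^sub>R R)))
      \<le> norm R * norm (suminf (blinfun_pow (d *\<^sub>R R)))"
    by (rule norm_blinfun_compose)
  also have "\<dots> \<le> norm R * (1 / (1 - norm (d *\<^sub>R R)))"
    using small by (intro mult_left_mono norm_neumann_series_le) simp_all
  finally show ?thesis by simp
qed

lemma positive_op_resolvent_shift:
  assumes "ordered_cone K" "positive_op K R" "d \<ge> 0"
  shows "positive_op K (R o\<^sub>L suminf (blinfun_pow (d *\<^sub>R R)))"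
  using assms small
  by (intro positive_op_compose positive_op_neumann_series summable_norm_blinfun_pow
      positive_op_scaleR) simp_all

end

lemma has_positive_resolvent_shift_down:
  fixes T R :: "'a::banach \<Rightarrow>\<^sub>L 'a"
  assumes "ordered_cone K" "is_resolvent T l R" "positive_op K R" "0 \<le> d" "d * norm R < 1"
  shows "has_positive_resolvent K T (l - d)"
proof -
  have "\<bar>d\<bar> * norm R < 1" using assms(4,5) by simp
  then show ?thesis
    unfolding has_positive_resolvent_def
    using is_resolvent_shift[OF assms(2)] positive_op_resolvent_shift[OF assms(2) _ assms(1,3,4)]
    by blast
qed

lemma has_positive_resolvent_above_norm:
  fixes T :: "'a::banach \<Rightarrow>\<^sub>L 'a"
  assumes cone: "ordered_cone K" and pos: "positive_op K T" and "l > norm T"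
  shows "has_positive_resolvent K T l"
proof -
  have "l > 0" using \<open>l > norm T\<close> norm_ge_zero[of T] by linarith
  let ?A = "(1 / l) *\<^sub>R T"
  let ?R = "(1 / l) *\<^sub>R suminf (blinfun_pow ?A)"
  have sum: "summable (\<lambda>n. norm (blinfun_pow ?A n))"
    using \<open>l > norm T\<close> \<open>l > 0\<close> by (intro summable_norm_blinfun_pow) (simp add: divide_less_eq)
  have N1: "suminf (blinfun_pow ?A) (x - (1 / l) *\<^sub>R T x) = x"
    and N2: "suminf (blinfun_pow ?A) x - (1 / l) *\<^sub>R T (suminf (blinfun_pow ?A) x) = x" for x
    using neumann_series_left_inverse[OF sum, of x] neumann_series_right_inverse[OF sum, of x]
    by (auto simp: blinfun.scaleR_left)
  have "l *\<^sub>R x - T x = l *\<^sub>R (x - (1 / l) *\<^sub>R T x)" for x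
    using \<open>l > 0\<close> by (simp add: algebra_simps)
  then have "?R (l *\<^sub>R x - T x) = x" for x
    using \<open>l > 0\<close> by (simp add: blinfun.scaleR_left blinfun.scaleR_right N1)
  moreover have "l *\<^sub>R ?R x - T (?R x) = x" for x
    using \<open>l > 0\<close> by (simp add: blinfun.scaleR_left blinfun.scaleR_right N2)
  ultimately have "is_resolvent T l ?R"
    unfolding is_resolvent_def by blast
  moreover have "positive_op K ?R"
    using cone pos \<open>l > 0\<close>
    by (intro positive_op_scaleR positive_op_neumann_series[OF sum]) simp_all
  ultimately show ?thesis unfolding has_positive_resolvent_def by blast
qed

lemma has_positive_resolvent_below:
  fixes T :: "'a::banach \<Rightarrow>\<^sub>L 'a"
  assumes cone: "ordered_cone K" and Rs: "is_resolvent T s Rs"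
    and above: "\<And>\<mu>. s + 1 / (4 * (norm Rs + 1)) \<le> \<mu> \<Longrightarrow> has_positive_resolvent K T \<mu>"
    and "s - 1 / (8 * (norm Rs + 1)) \<le> \<nu>"
  shows "has_positive_resolvent K T \<nu>"
proof -
  define M where "M = norm Rs + 1"
  have "M > 0" "norm Rs \<le> M" by (simp_all add: M_def add_nonneg_pos)
  define \<mu> where "\<mu> = s + 1 / (4 * M)"
  show ?thesis
  proof (cases "\<mu> \<le> \<nu>")
    case True
    then show ?thesis using above by (simp add: \<mu>_def M_def)
  next
    case False
    define d where "d = - 1 / (4 * M)"
    have "\<bar>d\<bar> * norm Rs \<le> 1 / 4"
      using \<open>M > 0\<close> \<open>norm Rs \<le> M\<close> by (simp add: d_def divide_le_eq)
    then have small: "\<bar>d\<bar> * norm Rs < 1" by simp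
    define R1 where "R1 = Rs o\<^sub>L suminf (blinfun_pow (d *\<^sub>R Rs))"
    have R1: "is_resolvent T \<mu> R1"
      using is_resolvent_shift[OF Rs small] by (simp add: R1_def d_def \<mu>_def)
    have "norm R1 \<le> norm Rs / (1 - \<bar>d\<bar> * norm Rs)"
      unfolding R1_def by (rule norm_resolvent_shift_le[OF Rs small])
    also have "\<dots> \<le> norm Rs / (1 - 1 / 4)"
      using \<open>\<bar>d\<bar> * norm Rs \<le> 1 / 4\<close> by (intro divide_left_mono) auto
    finally have "norm R1 \<le> norm Rs / (1 - 1 / 4)" .
    then have "norm R1 \<le> 2 * M" using \<open>norm Rs \<le> M\<close> \<open>M > 0\<close> by simp
    obtain R where "is_resolvent T \<mu> R" "positive_op K R"
      using above[of \<mu>] by (auto simp: has_positive_resolvent_def \<mu>_def M_def)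
    then have "positive_op K R1" using is_resolvent_unique[OF R1] by simp
    define e where "e = \<mu> - \<nu>"
    have "1 / (4 * M) + 1 / (8 * M) = 3 / (8 * M)" by simp
    then have "0 \<le> e" "e \<le> 3 / (8 * M)"
      using False \<open>s - 1 / (8 * (norm Rs + 1)) \<le> \<nu>\<close> unfolding e_def \<mu>_def M_def[symmetric]
      by linarith+
    then have "e * norm R1 \<le> 3 / (8 * M) * (2 * M)"
      using \<open>norm R1 \<le> 2 * M\<close> \<open>M > 0\<close> by (intro mult_mono) auto
    then have "e * norm R1 < 1" using \<open>M > 0\<close> by simp
    then show ?thesis
      using has_positive_resolvent_shift_down[OF cone R1 \<open>positive_op K R1\<close> \<open>0 \<le> e\<close>]
      by (simp add: e_def)
  qed
qed

text \<open>The infimum \<open>s\<close> of those \<open>l \<ge> 1\<close> above which all resolvents are positive is \<open>1\<close>: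
  otherwise the previous lemma, applied to the resolvent at \<open>s\<close>, would push positivity below
  \<open>s\<close>.\<close>

lemma has_positive_resolvent_1:
  fixes T :: "'a::banach \<Rightarrow>\<^sub>L 'a"
  assumes cone: "ordered_cone K" and pos: "positive_op K T" and "spectral_radius T < 1"
  shows "has_positive_resolvent K T 1"
proof -
  define S where "S = {l. l \<ge> 1 \<and> (\<forall>\<mu>\<ge>l. has_positive_resolvent K T \<mu>)}"
  have "max 1 (norm T + 1) \<in> S"
    unfolding S_def using has_positive_resolvent_above_norm[OF cone pos] by auto
  then have "S \<noteq> {}" by blast
  have "bdd_below S" unfolding S_def by (auto intro: bdd_belowI[where m=1])
  define s where "s = Inf S"
  have "s \<ge> 1" unfolding s_def using \<open>S \<noteq> {}\<close> by (intro cInf_greatest) (auto simp: S_def)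
  then have "complex_of_real s \<notin> op_spectrum T"
    using op_spectrum_norm_le_spectral_radius[of "complex_of_real s" T] \<open>spectral_radius T < 1\<close>
    by auto
  then obtain Rs where Rs: "is_resolvent T s Rs" by (rule is_resolvent_if_not_in_op_spectrum)
  define M where "M = norm Rs + 1"
  have "M > 0" by (simp add: M_def add_nonneg_pos)
  have "has_positive_resolvent K T \<mu>" if "s + 1 / (4 * M) \<le> \<mu>" for \<mu>
  proof -
    obtain l where "l \<in> S" "l < s + 1 / (4 * M)"
      using cInf_lessD[OF \<open>S \<noteq> {}\<close>, of "s + 1 / (4 * M)"] \<open>M > 0\<close> by (auto simp: s_def)
    then show ?thesis using that by (auto simp: S_def)
  qed
  then have below: "has_positive_resolvent K T \<nu>" if "s - 1 / (8 * M) \<le> \<nu>" for \<nu>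
    using has_positive_resolvent_below[OF cone Rs] that by (simp add: M_def)
  show ?thesis
  proof (cases "s - 1 / (8 * M) \<le> 1")
    case True
    then show ?thesis by (rule below)
  next
    case False
    then have "s - 1 / (8 * M) \<in> S" using below by (auto simp: S_def)
    then have "s \<le> s - 1 / (8 * M)" unfolding s_def using \<open>bdd_below S\<close> by (rule cInf_lower)
    with \<open>M > 0\<close> show ?thesis by simp
  qed
qed

section \<open>The equivalences\<close>

lemma bij_positive_inverse_of_resolvent:
  fixes T :: "'a::banach \<Rightarrow>\<^sub>L 'a"
  assumes R: "is_resolvent T 1 R" and pos: "positive_op K R"
  shows "bij (blinfun_apply (id_blinfun - T))" and "inv (blinfun_apply (id_blinfun - T)) ` K \<subseteq> K"
proof -
  let ?f = "blinfun_apply (id_blinfun - T)"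
  have R1: "R (?f x) = x" and R2: "?f (R x) = x" for x
    using R by (simp_all add: is_resolvent_def blinfun.diff_left)
  show "bij ?f" using R1 R2 by (intro o_bij[of R]) (auto simp: fun_eq_iff)
  have "inv ?f = R" using R1 R2 by (intro inv_unique_comp) (auto simp: fun_eq_iff)
  then show "inv ?f ` K \<subseteq> K" using pos by (simp add: positive_op_def)
qed

lemma norm_positive_linear_le_suminf:
  fixes g :: "'a::banach \<Rightarrow> 'a"
  assumes cone: "ordered_cone K" and "linear g" and pos: "g ` K \<subseteq> K"
    and normal: "\<And>x y. x \<in> K \<Longrightarrow> y - x \<in> K \<Longrightarrow> norm x \<le> C * norm y"
    and "summable z" and zK: "\<And>n. z n \<in> K"
  shows "norm (g (z n)) \<le> C * norm (g (suminf z))"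
proof (rule normal)
  show "g (z n) \<in> K" using pos zK by blast
  have "suminf z - z n \<in> K" using cone_suminf_minus[OF cone \<open>summable z\<close> zK, of "{n}"] by simp
  then show "g (suminf z) - g (z n) \<in> K"
    using pos by (auto simp: linear_diff[OF \<open>linear g\<close>, symmetric])
qed

lemma positive_linear_bounded_on_cone:
  fixes g :: "'a::banach \<Rightarrow> 'a"
  assumes cone: "ordered_cone K" and normal: "normal_cone K"
    and "linear g" and pos: "g ` K \<subseteq> K"
  shows "\<exists>c\<ge>0. \<forall>y\<in>K. norm (g y) \<le> c * norm y"
proof (rule ccontr)
  assume "\<not> ?thesis"
  then have "\<forall>c\<ge>0. \<exists>y\<in>K. c * norm y < norm (g y)" using not_le by blast
  then have "\<exists>y\<in>K. 4 ^ n * norm y < norm (g y)" for n :: nat by simp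
  then obtain y where y: "\<And>n. y n \<in> K" "\<And>n. 4 ^ n * norm (y n) < norm (g (y n))"
    by metis
  obtain C where "C > 0" and C: "\<And>x y. x \<in> K \<Longrightarrow> y - x \<in> K \<Longrightarrow> norm x \<le> C * norm y"
    using normal by (elim normal_coneE) blast
  have gy: "norm (g (y n)) > 0" for n
  proof -
    have "0 \<le> 4 ^ n * norm (y n)" by simp
    with y(2)[of n] show ?thesis by linarith
  qed
  define z where "z n = (2 ^ n / norm (g (y n))) *\<^sub>R y n" for n
  have zK: "z n \<in> K" for n
    unfolding z_def using cone y(1) gy by (intro cone_scaleR) (auto intro: less_imp_le)
  have gz: "norm (g (z n)) = 2 ^ n" for n
    using gy[of n] by (simp add: z_def linear_scale[OF \<open>linear g\<close>])
  have nz: "norm (z n) \<le> (1 / 2) ^ n" for n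
  proof -
    have "norm (y n) \<le> norm (g (y n)) / 4 ^ n"
      using y(2)[of n] by (simp add: pos_le_divide_eq mult.commute)
    have "norm (z n) = 2 ^ n / norm (g (y n)) * norm (y n)"
      by (simp add: z_def)
    also have "\<dots> \<le> 2 ^ n / norm (g (y n)) * (norm (g (y n)) / 4 ^ n)"
      by (rule mult_left_mono[OF \<open>norm (y n) \<le> norm (g (y n)) / 4 ^ n\<close>]) simp
    also have "\<dots> = 2 ^ n / 4 ^ n" using gy[of n] by simp
    also have "\<dots> = (1 / 2) ^ n" by (simp add: power_divide[symmetric])
    finally show ?thesis .
  qed
  have "summable z"
  proof (rule summable_norm_cancel, rule summable_comparison_test)
    show "\<exists>N. \<forall>n\<ge>N. norm (norm (z n)) \<le> (1 / 2) ^ n" using nz by auto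
    show "summable (\<lambda>n. (1 / 2 :: real) ^ n)" by (rule summable_geometric) simp
  qed
  have "2 ^ n \<le> C * norm (g (suminf z))" for n
    using norm_positive_linear_le_suminf[OF cone \<open>linear g\<close> pos C \<open>summable z\<close> zK] gz by simp
  moreover obtain n :: nat where "C * norm (g (suminf z)) < 2 ^ n"
    using real_arch_pow[of 2] by auto
  ultimately show False by (meson not_le)
qed

lemma monotone_bounded_invertibility_of_positive_inverse:
  fixes K :: "'a::banach set" and T :: "'a \<Rightarrow>\<^sub>L 'a"
  assumes cone: "ordered_cone K" and normal: "normal_cone K"
    and bij: "bij (blinfun_apply (id_blinfun - T))"
    and inv_pos: "inv (blinfun_apply (id_blinfun - T)) ` K \<subseteq> K"
  shows "\<exists>c\<ge>0. \<forall>x\<in>K. \<forall>y\<in>K. y - (x - T x) \<in> K \<longrightarrow> norm x \<le> c * norm y"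
proof -
  let ?f = "blinfun_apply (id_blinfun - T)"
  obtain h where "linear h" "h \<circ> ?f = id"
    using linear_injective_left_inverse[OF bounded_linear.linear[OF blinfun.bounded_linear_right]
        bij_is_inj[OF bij]] by blast
  have "inv ?f y = h y" for y
  proof -
    obtain x where "y = ?f x" using bij_is_surj[OF bij] by blast
    then show ?thesis
      using \<open>h \<circ> ?f = id\<close> inv_f_f[OF bij_is_inj[OF bij]] by (simp add: fun_eq_iff)
  qed
  then have "inv ?f = h" by (rule ext)
  with \<open>linear h\<close> have "linear (inv ?f)" by simp
  obtain c where "c \<ge> 0" and c: "\<And>y. y \<in> K \<Longrightarrow> norm (inv ?f y) \<le> c * norm y"
    using positive_linear_bounded_on_cone[OF cone normal \<open>linear (inv ?f)\<close> inv_pos] by blast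
  obtain C where "C > 0" and C: "\<And>x y. x \<in> K \<Longrightarrow> y - x \<in> K \<Longrightarrow> norm x \<le> C * norm y"
    using normal by (elim normal_coneE) blast
  have "norm x \<le> (C * c) * norm y" if "x \<in> K" "y \<in> K" "y - (x - T x) \<in> K" for x y
  proof -
    have "inv ?f y - x = inv ?f (y - ?f x)"
      using bij by (simp add: linear_diff[OF \<open>linear (inv ?f)\<close>] bij_is_inj)
    also have "\<dots> \<in> K" using inv_pos that(3) by (auto simp: blinfun.diff_left)
    finally have "norm x \<le> C * norm (inv ?f y)" using C \<open>x \<in> K\<close> by blast
    also have "\<dots> \<le> C * (c * norm y)" using c[OF \<open>y \<in> K\<close>] \<open>C > 0\<close> by simp
    finally show ?thesis by (simp add: mult_ac)
  qed
  then show ?thesis using \<open>C > 0\<close> \<open>c \<ge> 0\<close> by (intro exI[of _ "C * c"]) simp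
qed

lemma monotone_bounded_invertibility_scaleR:
  fixes T :: "'a::banach \<Rightarrow>\<^sub>L 'a"
  assumes cone: "ordered_cone K" and pos: "positive_op K T" and "c \<ge> 0" "\<delta> \<ge> 0"
    and small: "c * \<delta> * norm T \<le> 1 / 2"
    and mbi: "\<forall>x\<in>K. \<forall>y\<in>K. y - (x - T x) \<in> K \<longrightarrow> norm x \<le> c * norm y"
    and x: "x \<in> K" and y: "y \<in> K" and le: "y - (x - ((1 + \<delta>) *\<^sub>R T) x) \<in> K"
  shows "norm x \<le> 2 * c * norm y"
proof -
  have "y + \<delta> *\<^sub>R T x \<in> K"
    using cone pos x y \<open>\<delta> \<ge> 0\<close> by (intro cone_add cone_scaleR positive_opD)
  moreover have "(y + \<delta> *\<^sub>R T x) - (x - T x) = y - (x - ((1 + \<delta>) *\<^sub>R T) x)"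
    by (simp add: blinfun.bilinear_simps algebra_simps)
  ultimately have "norm x \<le> c * norm (y + \<delta> *\<^sub>R T x)"
    using mbi x le by metis
  also have "\<dots> \<le> c * (norm y + \<delta> * (norm T * norm x))"
    using \<open>c \<ge> 0\<close> \<open>\<delta> \<ge> 0\<close> norm_triangle_ineq[of y "\<delta> *\<^sub>R T x"] norm_blinfun[of T x]
    by (intro mult_left_mono) (auto intro: order_trans mult_left_mono add_left_mono)
  also have "\<dots> = c * norm y + (c * \<delta> * norm T) * norm x"
    by (simp add: algebra_simps)
  also have "\<dots> \<le> c * norm y + 1 / 2 * norm x"
    using small by (intro add_left_mono mult_right_mono) auto
  finally show ?thesis by simp
qed

lemma norm_blinfun_pow_on_cone_le:
  fixes T :: "'a::banach \<Rightarrow>\<^sub>L 'a"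
  assumes cone: "ordered_cone K" and pos: "positive_op K T"
    and normal: "\<And>x y. x \<in> K \<Longrightarrow> y - x \<in> K \<Longrightarrow> norm x \<le> C * norm y" and "C \<ge> 0"
    and mbi: "\<forall>x\<in>K. \<forall>y\<in>K. y - (x - T x) \<in> K \<longrightarrow> norm x \<le> c * norm y"
    and u: "u \<in> K"
  shows "norm (blinfun_pow T n u) \<le> C * c * norm u"
proof -
  have pow: "blinfun_pow T k u \<in> K" for k
    using pos u by (intro positive_opD[OF positive_op_blinfun_pow])
  define x where "x = (\<Sum>k\<le>n. blinfun_pow T k u)"
  have "x \<in> K" unfolding x_def using cone pow by (intro cone_sum)
  moreover have "u - (x - T x) = blinfun_pow T (Suc n) u"
    unfolding x_def telescoping_blinfun_pow by simp
  ultimately have "norm x \<le> c * norm u"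
    using mbi u pow[of "Suc n"] by auto
  have "x - blinfun_pow T n u = (\<Sum>k<n. blinfun_pow T k u)"
    unfolding x_def by (simp add: lessThan_Suc_atMost[symmetric])
  then have "x - blinfun_pow T n u \<in> K" using cone pow by (simp add: cone_sum)
  then have "norm (blinfun_pow T n u) \<le> C * norm x" using normal pow by blast
  also have "\<dots> \<le> C * (c * norm u)"
    using \<open>norm x \<le> c * norm u\<close> \<open>C \<ge> 0\<close> by (rule mult_left_mono)
  finally show ?thesis by (simp add: mult_ac)
qed

lemma spectral_radius_lt_1_of_monotone_bounded_invertibility:
  fixes K :: "'a::banach set" and T :: "'a \<Rightarrow>\<^sub>L 'a"
  assumes cone: "ordered_cone K" and gen: "generating_cone K" and normal: "normal_cone K"
    and pos: "positive_op K T" and "c \<ge> 0"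
    and mbi: "\<forall>x\<in>K. \<forall>y\<in>K. y - (x - T x) \<in> K \<longrightarrow> norm x \<le> c * norm y"
  shows "spectral_radius T < 1"
proof -
  obtain C where "C > 0" and C: "\<And>x y. x \<in> K \<Longrightarrow> y - x \<in> K \<Longrightarrow> norm x \<le> C * norm y"
    using normal by (elim normal_coneE) blast
  define \<delta> where "\<delta> = 1 / (2 * (c * norm T + 1))"
  have "0 \<le> c * norm T" using \<open>c \<ge> 0\<close> by simp
  then have "\<delta> > 0" by (simp add: \<delta>_def)
  have "c * \<delta> * norm T = (c * norm T) / (2 * (c * norm T + 1))" by (simp add: \<delta>_def)
  also have "\<dots> \<le> 1 / 2" using \<open>0 \<le> c * norm T\<close> by (simp add: divide_le_eq)
  finally have "c * \<delta> * norm T \<le> 1 / 2" .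
  define T' where "T' = (1 + \<delta>) *\<^sub>R T"
  have pos': "positive_op K T'"
    unfolding T'_def using cone pos \<open>\<delta> > 0\<close> by (intro positive_op_scaleR) auto
  have mbi': "\<forall>x\<in>K. \<forall>y\<in>K. y - (x - T' x) \<in> K \<longrightarrow> norm x \<le> 2 * c * norm y"
    unfolding T'_def using monotone_bounded_invertibility_scaleR[OF cone pos \<open>c \<ge> 0\<close>
        less_imp_le[OF \<open>\<delta> > 0\<close>] \<open>c * \<delta> * norm T \<le> 1 / 2\<close> mbi] by blast
  have "norm (blinfun_pow T' n u) \<le> C * (2 * c) * norm u" if "u \<in> K" for n u
    by (rule norm_blinfun_pow_on_cone_le[OF cone pos' C less_imp_le[OF \<open>C > 0\<close>] mbi' that])
  then obtain B where B: "\<And>n. norm (blinfun_pow T' n) \<le> B"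
    using uniform_bound_of_cone_bound[OF gen, of "blinfun_pow T'"] by blast
  have "norm (blinfun_pow T n) \<le> B * (1 / (1 + \<delta>)) ^ n" for n
  proof -
    have "(1 + \<delta>) ^ n * norm (blinfun_pow T n) \<le> B"
      using B[of n] \<open>\<delta> > 0\<close> by (simp add: T'_def blinfun_pow_scaleR)
    then show ?thesis
      using \<open>\<delta> > 0\<close> by (simp add: power_one_over pos_le_divide_eq mult.commute)
  qed
  then have "spectral_radius T \<le> 1 / (1 + \<delta>)"
    by (rule spectral_radius_le_of_pow_bound) (use \<open>\<delta> > 0\<close> in simp)
  also have "\<dots> < 1" using \<open>\<delta> > 0\<close> by simp
  finally show ?thesis .
qed

lemma uniform_small_gain_of_resolvent:
  fixes K :: "'a::banach set" and T :: "'a \<Rightarrow>\<^sub>L 'a"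
  assumes cone: "ordered_cone K" and normal: "normal_cone K"
    and R: "is_resolvent T 1 R" and pos: "positive_op K R"
  shows "\<exists>\<eta>>0. \<forall>x\<in>K. infdist (T x - x) K \<ge> \<eta> * norm x"
proof -
  obtain C where "C > 0" and C: "\<And>x y. x \<in> K \<Longrightarrow> y - x \<in> K \<Longrightarrow> norm x \<le> C * norm y"
    using normal by (elim normal_coneE) blast
  define \<eta> where "\<eta> = 1 / (C * (norm R + 1))"
  have "C * (norm R + 1) > 0" using \<open>C > 0\<close> by (simp add: add_nonneg_pos)
  have "\<eta> * norm x \<le> infdist (T x - x) K" if "x \<in> K" for x
    unfolding infdist_notempty[OF cone_nonempty[OF cone]]
  proof (rule cINF_greatest[OF cone_nonempty[OF cone]])
    fix k assume "k \<in> K"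
    define w where "w = T x - x - k"
    have "x = R (x - T x)" using R by (simp add: is_resolvent_def)
    also have "x - T x = - k - w" by (simp add: w_def)
    finally have "- R w - x = R k" by (simp add: blinfun.bilinear_simps)
    then have "norm x \<le> C * norm (- R w)"
      using C \<open>x \<in> K\<close> positive_opD[OF pos \<open>k \<in> K\<close>] by metis
    also have "\<dots> \<le> C * ((norm R + 1) * norm w)"
    proof -
      have "norm (R w) \<le> norm R * norm w + norm w"
        using norm_blinfun[of R w] norm_ge_zero[of w] by linarith
      then show ?thesis using \<open>C > 0\<close> by (simp add: distrib_right)
    qed
    finally have "norm x \<le> (C * (norm R + 1)) * norm w" by (simp add: mult.assoc)
    then have "\<eta> * norm x \<le> norm w"
      using \<open>C * (norm R + 1) > 0\<close> by (simp add: \<eta>_def pos_divide_le_eq mult.commute)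
    then show "\<eta> * norm x \<le> dist (T x - x) k" by (simp add: w_def dist_norm)
  qed
  moreover have "\<eta> > 0" using \<open>C * (norm R + 1) > 0\<close> by (simp add: \<eta>_def)
  ultimately show ?thesis by blast
qed

lemma robust_small_gain_of_uniform_small_gain:
  fixes K :: "'a::banach set" and T :: "'a \<Rightarrow>\<^sub>L 'a"
  assumes "\<eta> > 0" and gain: "\<forall>x\<in>K. infdist (T x - x) K \<ge> \<eta> * norm x"
  shows "\<exists>\<epsilon>>0. \<forall>x\<in>K. \<forall>P. x \<noteq> 0 \<longrightarrow> positive_op K P \<longrightarrow> norm P \<le> \<epsilon> \<longrightarrow> (T + P) x - x \<notin> K"
proof (intro exI[of _ "\<eta> / 2"] conjI ballI allI impI notI)
  fix x and P :: "'a \<Rightarrow>\<^sub>L 'a"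
  assume "x \<in> K" "x \<noteq> 0" "norm P \<le> \<eta> / 2" "(T + P) x - x \<in> K"
  have "infdist (T x - x) K \<le> dist (T x - x) ((T + P) x - x)"
    by (rule infdist_le) fact
  also have "\<dots> = norm (P x)" by (simp add: dist_norm blinfun.bilinear_simps)
  also have "\<dots> \<le> norm P * norm x" by (rule norm_blinfun)
  also have "\<dots> \<le> \<eta> / 2 * norm x" using \<open>norm P \<le> \<eta> / 2\<close> by (rule mult_right_mono) simp
  also have "\<dots> < \<eta> * norm x" using \<open>\<eta> > 0\<close> \<open>x \<noteq> 0\<close> by simp
  finally show False using gain \<open>x \<in> K\<close> by auto
qed (use \<open>\<eta> > 0\<close> in simp)

lemma rank_one_positive_op:
  fixes K :: "'a::banach set" and \<phi> :: "'a \<Rightarrow> real"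
  assumes cone: "ordered_cone K" and "bounded_linear \<phi>" and \<phi>_le: "\<And>w. \<bar>\<phi> w\<bar> \<le> norm w"
    and \<phi>_pos: "\<And>k. k \<in> K \<Longrightarrow> \<phi> k \<ge> 0" and "\<phi> x \<noteq> 0" and "v \<in> K" "v \<noteq> 0"
  obtains P :: "'a \<Rightarrow>\<^sub>L 'a" where "\<And>w. P w = \<phi> w *\<^sub>R v" "positive_op K P"
    "dim (range (blinfun_apply P)) = 1" "norm P \<le> norm v"
proof
  let ?P = "Blinfun (\<lambda>w. \<phi> w *\<^sub>R v)"
  show P: "?P w = \<phi> w *\<^sub>R v" for w
    using \<open>bounded_linear \<phi>\<close>
    by (simp add: bounded_linear_Blinfun_apply
        bounded_linear_compose[OF bounded_linear_scaleR_left])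
  show "positive_op K ?P"
    unfolding positive_op_def using cone \<phi>_pos \<open>v \<in> K\<close> by (auto simp: P cone_scaleR)
  have "range ?P = range (\<lambda>t. t *\<^sub>R v)"
  proof safe
    fix t :: real
    have "\<phi> ((t / \<phi> x) *\<^sub>R x) = t"
      using \<open>\<phi> x \<noteq> 0\<close> linear_scale[OF bounded_linear.linear[OF \<open>bounded_linear \<phi>\<close>]] by simp
    then show "t *\<^sub>R v \<in> range ?P" by (metis P rangeI)
  qed (auto simp: P)
  then show "dim (range (blinfun_apply ?P)) = 1"
    using \<open>v \<noteq> 0\<close> by (simp add: span_singleton[symmetric] dim_span dim_eq_card_independent)
  show "norm ?P \<le> norm v"
  proof (rule norm_blinfun_bound)
    show "norm (?P w) \<le> norm v * norm w" for w
      using mult_left_mono[OF \<phi>_le[of w] norm_ge_zero[of v]] by (simp add: P mult.commute)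
  qed simp
qed

lemma rank_one_perturbation_of_monotone_defect:
  fixes K :: "'a::banach set" and T :: "'a \<Rightarrow>\<^sub>L 'a"
  assumes cone: "ordered_cone K" and "C > 0"
    and normal: "\<And>x y. x \<in> K \<Longrightarrow> y - x \<in> K \<Longrightarrow> norm x \<le> C * norm y"
    and x: "x \<in> K" "x \<noteq> 0" and y: "y \<in> K" and le: "y - (x - T x) \<in> K" and "s > 0"
  obtains P where "positive_op K P" "dim (range (blinfun_apply P)) = 1"
    "norm P \<le> C * (norm y + s * norm x) / norm x" "(T + P) x - x \<in> K"
proof -
  obtain \<phi> where \<phi>: "bounded_linear \<phi>" "\<And>w. \<bar>\<phi> w\<bar> \<le> norm w" "\<And>k. k \<in> K \<Longrightarrow> \<phi> k \<ge> 0"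
    and \<phi>x: "norm x \<le> C * \<phi> x"
    using positive_functional_norming[OF cone \<open>C > 0\<close> normal x(1)] by blast
  have "0 < norm x" using x(2) by simp
  then have "0 < C * \<phi> x" using \<phi>x by linarith
  then have "\<phi> x > 0" using \<open>C > 0\<close> by (simp add: zero_less_mult_iff)
  define u where "u = y + s *\<^sub>R x"
  have "u \<in> K" using cone x y \<open>s > 0\<close> by (simp add: u_def cone_add cone_scaleR)
  have "u \<noteq> 0"
    using cone_add_eq_zero[OF cone cone_scaleR[OF cone _ x(1)] y, of s] \<open>s > 0\<close> x(2)
    by (auto simp: u_def add.commute)
  define v where "v = (1 / \<phi> x) *\<^sub>R u"
  have "v \<in> K" "v \<noteq> 0"
    using \<open>u \<in> K\<close> \<open>u \<noteq> 0\<close> \<open>\<phi> x > 0\<close> cone by (simp_all add: v_def cone_scaleR)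
  then obtain P :: "'a \<Rightarrow>\<^sub>L 'a" where P: "\<And>w. P w = \<phi> w *\<^sub>R v" "positive_op K P"
      "dim (range (blinfun_apply P)) = 1" "norm P \<le> norm v"
    using rank_one_positive_op[OF cone \<phi>, of x] \<open>\<phi> x > 0\<close> by auto
  have "norm P \<le> norm u / \<phi> x" using P(4) \<open>\<phi> x > 0\<close> by (simp add: v_def)
  also have "\<dots> \<le> norm u / (norm x / C)"
  proof (rule divide_left_mono)
    show "norm x / C \<le> \<phi> x" using \<phi>x \<open>C > 0\<close> by (simp add: pos_divide_le_eq mult.commute)
    show "0 < \<phi> x * (norm x / C)" using x(2) \<open>C > 0\<close> \<open>\<phi> x > 0\<close> by simp
  qed simp
  also have "\<dots> = C * norm u / norm x" by simp
  also have "\<dots> \<le> C * (norm y + s * norm x) / norm x"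
  proof -
    have "norm u \<le> norm y + s * norm x"
      using norm_triangle_ineq[of y "s *\<^sub>R x"] \<open>s > 0\<close> by (simp add: u_def)
    then show ?thesis using \<open>C > 0\<close> by (intro divide_right_mono mult_left_mono) simp_all
  qed
  finally have "norm P \<le> C * (norm y + s * norm x) / norm x" .
  have "P x = u" using \<open>\<phi> x > 0\<close> by (simp add: P(1) v_def)
  then have "(T + P) x - x = (y - (x - T x)) + s *\<^sub>R x"
    by (simp add: blinfun.add_left u_def algebra_simps)
  also have "\<dots> \<in> K"
    using cone le x(1) \<open>s > 0\<close> by (simp add: cone_add cone_scaleR)
  finally have "(T + P) x - x \<in> K" .
  show ?thesis by (rule that) fact+
qed

lemma monotone_bounded_invertibility_of_rank_one_small_gain:
  fixes K :: "'a::banach set" and T :: "'a \<Rightarrow>\<^sub>L 'a"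
  assumes cone: "ordered_cone K" and normal: "normal_cone K" and "\<epsilon> > 0"
    and gain: "\<forall>x\<in>K. \<forall>P. x \<noteq> 0 \<longrightarrow> positive_op K P \<longrightarrow>
                 dim (range (blinfun_apply P)) = 1 \<longrightarrow> norm P \<le> \<epsilon> \<longrightarrow> (T + P) x - x \<notin> K"
  shows "\<exists>c\<ge>0. \<forall>x\<in>K. \<forall>y\<in>K. y - (x - T x) \<in> K \<longrightarrow> norm x \<le> c * norm y"
proof -
  obtain C where "C > 0" and C: "\<And>x y. x \<in> K \<Longrightarrow> y - x \<in> K \<Longrightarrow> norm x \<le> C * norm y"
    using normal by (elim normal_coneE) blast
  have "norm x \<le> 2 * C / \<epsilon> * norm y"
    if x: "x \<in> K" and y: "y \<in> K" and le: "y - (x - T x) \<in> K" for x y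
  proof (rule ccontr)
    assume "\<not> ?thesis"
    then have "2 * C * norm y / \<epsilon> < norm x" by simp
    then have big: "2 * C * norm y < \<epsilon> * norm x"
      using \<open>\<epsilon> > 0\<close> by (simp add: pos_divide_less_eq mult.commute)
    have "x \<noteq> 0"
    proof
      assume "x = 0"
      with big \<open>C > 0\<close> show False by (simp add: mult_less_0_iff)
    qed
    obtain P where P: "positive_op K P" "dim (range (blinfun_apply P)) = 1"
        "norm P \<le> C * (norm y + \<epsilon> / (2 * C) * norm x) / norm x" "(T + P) x - x \<in> K"
      using rank_one_perturbation_of_monotone_defect[OF cone \<open>C > 0\<close> C x \<open>x \<noteq> 0\<close> y le,
          of "\<epsilon> / (2 * C)"] \<open>C > 0\<close> \<open>\<epsilon> > 0\<close> by auto
    have "C * (norm y + \<epsilon> / (2 * C) * norm x) / norm x = C * norm y / norm x + \<epsilon> / 2"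
      using \<open>C > 0\<close> \<open>x \<noteq> 0\<close> by (simp add: field_simps)
    also have "\<dots> \<le> \<epsilon>"
    proof -
      have "C * norm y / norm x \<le> \<epsilon> / 2"
        using big \<open>x \<noteq> 0\<close> by (simp add: pos_divide_le_eq)
      then show ?thesis by linarith
    qed
    finally have "norm P \<le> \<epsilon>" using P(3) by linarith
    then show False using gain P(1,2,4) x \<open>x \<noteq> 0\<close> by blast
  qed
  then show ?thesis using \<open>C > 0\<close> \<open>\<epsilon> > 0\<close> by (intro exI[of _ "2 * C / \<epsilon>"]) simp
qed

theorem theorem3p3:
  fixes K :: "'a::banach set" and T :: "'a \<Rightarrow>\<^sub>L 'a"
  assumes cone: "ordered_cone K"
    and gen: "generating_cone K"
    and normal: "normal_cone K"
    and pos: "positive_op K T"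
  defines "i \<equiv> spectral_radius T < 1"
    and "ii \<equiv> bij (blinfun_apply (id_blinfun - T)) \<and>
              inv (blinfun_apply (id_blinfun - T)) ` K \<subseteq> K"
    and "iii \<equiv> (\<exists>c\<ge>0. \<forall>x\<in>K. \<forall>y\<in>K. y - (x - T x) \<in> K \<longrightarrow> norm x \<le> c * norm y)"
    and "iv \<equiv> (\<exists>\<eta>>0. \<forall>x\<in>K. infdist (T x - x) K \<ge> \<eta> * norm x)"
    and "v \<equiv> (\<exists>\<epsilon>>0. \<forall>x\<in>K. \<forall>P. x \<noteq> 0 \<longrightarrow> positive_op K P \<longrightarrow> norm P \<le> \<epsilon> \<longrightarrow>
                 (T + P) x - x \<notin> K)"
    and "vi \<equiv> (\<exists>\<epsilon>>0. \<forall>x\<in>K. \<forall>P. x \<noteq> 0 \<longrightarrow> positive_op K P \<longrightarrow>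
                 dim (range (blinfun_apply P)) = 1 \<longrightarrow> norm P \<le> \<epsilon> \<longrightarrow>
                 (T + P) x - x \<notin> K)"
  shows "(i \<longleftrightarrow> ii) \<and> (i \<longleftrightarrow> iii) \<and> (i \<longleftrightarrow> iv) \<and> (i \<longleftrightarrow> v) \<and> (i \<longleftrightarrow> vi)"
proof -
  have resolvent: "\<exists>R. is_resolvent T 1 R \<and> positive_op K R" if i
    using has_positive_resolvent_1[OF cone pos] that
    unfolding i_def has_positive_resolvent_def by blast
  have "ii" if i
    using resolvent[OF that] bij_positive_inverse_of_resolvent unfolding ii_def by blast
  moreover have "iii" if ii
    using monotone_bounded_invertibility_of_positive_inverse[OF cone normal] that
    unfolding ii_def iii_def by blast
  moreover have "i" if iii
    using spectral_radius_lt_1_of_monotone_bounded_invertibility[OF cone gen normal pos] that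
    unfolding iii_def i_def by blast
  moreover have "iv" if i
    using resolvent[OF that] uniform_small_gain_of_resolvent[OF cone normal]
    unfolding iv_def by blast
  moreover have "v" if iv
    using robust_small_gain_of_uniform_small_gain that unfolding iv_def v_def by blast
  moreover have "vi" if v
    using that unfolding v_def vi_def by blast
  moreover have "iii" if vi
    using monotone_bounded_invertibility_of_rank_one_small_gain[OF cone normal] that
    unfolding vi_def iii_def by blast
  ultimately show ?thesis by blast
qed

end
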